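(* Let $\mathscr{V}$ be a braided monoidal category, let $A=(A,\mu_A,\eta_A)$ be a monoid and $B=(B,\mu_B,\eta_B,\delta_B,\varepsilon_B)$ a bimonoid in $\mathscr{V}$, and let $(\gamma,\tau)$ be a twisted right coaction of $B$ on $A$. Define $$z=(\eta_A\otimes 1_B)\bullet\gamma\colon B\otimes A\to A\otimes B,\qquad d=(\eta_A\otimes\delta_B)\bullet\tau\colon B\to A\otimes B\otimes B,\qquad w=\eta_A\circ\varepsilon_B\colon B\to A,$$ where the first dot product is taken in the monoid $A\otimes B$ (with $\eta_A\otimes 1_B\colon B\cong I\otimes B\to A\otimes B$) and the second in the monoid $A\otimes B\otimes B$ (with $B\otimes I\cong B$). Then $(B,d,w,z)$ is a mixed opwreath around the monoid $A$ in $\mathscr{V}$.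
   Context: Associativity and unit constraints of $\mathscr{V}$ are suppressed; $c$ denotes the braiding. For monoids $M,N$, $M\otimes N$ is a monoid with multiplication $(\mu_M\otimes\mu_N)\circ(1_M\otimes c_{N,M}\otimes 1_N)$ and unit $\eta_M\otimes\eta_N$. A bimonoid $B$ is a monoid and comonoid $(B,\delta_B,\varepsilon_B)$ such that $\delta_B\colon B\to B\otimes B$ and $\varepsilon_B\colon B\to I$ are monoid morphisms. For a monoid $M$ and morphisms $u\colon X\to M$, $v\colon Y\to M$, the dot product is $u\bullet v=\mu_M\circ(u\otimes v)\colon X\otimes Y\to M$. A twisted right coaction of the bimonoid $B$ on the monoid $A$ consists of a monoid morphism $\gamma\colon A\to A\otimes B$ and a morphism $\tau\colon I\to A\otimes B\otimes B$ such that: (counitality) $(1_A\otimes\varepsilon_B)\circ\gamma=1_A$; ($\tau$-coassociativity) $\tau\bullet((\gamma\otimes 1_B)\circ\gamma)=((1_A\otimes\delta_B)\circ\gamma)\bullet\tau$ (morphisms $A\to A\otimes B\otimes B$, dot in the monoid $A\otimes B\otimes B$); (2-cocyclicity) $((1_A\otimes\delta_B\otimes 1_B)\circ\tau)\bullet(\tau\otimes\eta_B)=((1_{A\otimes B}\otimes\delta_B)\circ\tau)\bullet((\gamma\otimes 1_{B\otimes B})\circ\tau)$ (morphisms $I\to A\otimes B^{\otimes 3}$, dot in $A\otimes B^{\otimes 3}$); (normality) $(1_{A\otimes B}\otimes\varepsilon_B)\circ\tau=\eta_A\otimes\eta_B=(1_A\otimes\varepsilon_B\otimes 1_B)\circ\tau$.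 ($\tau$ is not required to be $\bullet$-invertible.) A mixed opwreath around a monoid $A=(A,m,j)$ in $\mathscr{V}$ is a quadruple $(C,d,w,z)$ of an object $C$ and morphisms $d\colon C\to A\otimes C\otimes C$, $w\colon C\to A$, $z\colon C\otimes A\to A\otimes C$ satisfying: (1) $z\circ(1_C\otimes m)=(m\otimes 1_C)\circ(1_A\otimes z)\circ(z\otimes 1_A)$; (2) $z\circ(1_C\otimes j)=j\otimes 1_C$; (3) $m\circ(w\otimes 1_A)=m\circ(1_A\otimes w)\circ z$; (4) $(m\otimes 1_{C\otimes C})\circ(1_A\otimes z\otimes 1_C)\circ(1_{A\otimes C}\otimes z)\circ(d\otimes 1_A)=(m\otimes 1_{C\otimes C})\circ(1_A\otimes d)\circ z$; (5) $(m\otimes 1_{C^{\otimes 3}})\circ(1_A\otimes d\otimes 1_C)\circ d=(m\otimes 1_{C^{\otimes 3}})\circ(1_A\otimes z\otimes 1_{C\otimes C})\circ(1_{A\otimes C}\otimes d)\circ d$; (6) $(m\otimes 1_C)\circ(1_A\otimes w\otimes 1_C)\circ d=j\otimes 1_C$; (7) $(m\otimes 1_C)\circ(1_A\otimes z)\circ(1_{A\otimes C}\otimes w)\circ d=j\otimes 1_C$. *)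

theory Defs
  imports Main
begin

text \<open>A strict braided monoidal category (associativity and unit constraints
suppressed, as in the paper).  Objects of type 'o, morphisms of type 'm.\<close>

record ('o, 'm) bmcat =
  ob    :: "'o set"
  hom   :: "'o \<Rightarrow> 'o \<Rightarrow> 'm set"
  cmp   :: "'m \<Rightarrow> 'm \<Rightarrow> 'm"      (* cmp g f = g \<circ> f *)
  ident :: "'o \<Rightarrow> 'm"
  tob   :: "'o \<Rightarrow> 'o \<Rightarrow> 'o"
  tar   :: "'m \<Rightarrow> 'm \<Rightarrow> 'm"
  unitob :: "'o"
  br    :: "'o \<Rightarrow> 'o \<Rightarrow> 'm"

definition braided_moncat :: "('o, 'm, 'x) bmcat_scheme \<Rightarrow> bool" where
  "braided_moncat V \<longleftrightarrow>
     (\<comment> \<open>category\<close>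
      (\<forall>X\<in>ob V. \<forall>Y\<in>ob V. \<forall>Z\<in>ob V. \<forall>f\<in>hom V X Y. \<forall>g\<in>hom V Y Z.
          cmp V g f \<in> hom V X Z) \<and>
      (\<forall>W\<in>ob V. \<forall>X\<in>ob V. \<forall>Y\<in>ob V. \<forall>Z\<in>ob V.
          \<forall>f\<in>hom V W X. \<forall>g\<in>hom V X Y. \<forall>h\<in>hom V Y Z.
          cmp V h (cmp V g f) = cmp V (cmp V h g) f) \<and>
      (\<forall>X\<in>ob V. ident V X \<in> hom V X X) \<and>
      (\<forall>X\<in>ob V. \<forall>Y\<in>ob V. \<forall>f\<in>hom V X Y.
          cmp V (ident V Y) f = f \<and> cmp V f (ident V X) = f) \<and>
      \<comment> \<open>strict monoidal structure\<close>
      unitob V \<in> ob V \<and>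
      (\<forall>X\<in>ob V. \<forall>Y\<in>ob V. tob V X Y \<in> ob V) \<and>
      (\<forall>X\<in>ob V. \<forall>Y\<in>ob V. \<forall>Z\<in>ob V. tob V (tob V X Y) Z = tob V X (tob V Y Z)) \<and>
      (\<forall>X\<in>ob V. tob V (unitob V) X = X \<and> tob V X (unitob V) = X) \<and>
      (\<forall>X\<in>ob V. \<forall>X'\<in>ob V. \<forall>Y\<in>ob V. \<forall>Y'\<in>ob V. \<forall>f\<in>hom V X X'. \<forall>g\<in>hom V Y Y'.
          tar V f g \<in> hom V (tob V X Y) (tob V X' Y')) \<and>
      (\<forall>X\<in>ob V. \<forall>X'\<in>ob V. \<forall>Y\<in>ob V. \<forall>Y'\<in>ob V. \<forall>Z\<in>ob V. \<forall>Z'\<in>ob V.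
          \<forall>f\<in>hom V X X'. \<forall>g\<in>hom V Y Y'. \<forall>h\<in>hom V Z Z'.
          tar V (tar V f g) h = tar V f (tar V g h)) \<and>
      (\<forall>X\<in>ob V. \<forall>Y\<in>ob V. \<forall>f\<in>hom V X Y.
          tar V (ident V (unitob V)) f = f \<and> tar V f (ident V (unitob V)) = f) \<and>
      (\<forall>X\<in>ob V. \<forall>Y\<in>ob V. tar V (ident V X) (ident V Y) = ident V (tob V X Y)) \<and>
      (\<forall>X\<in>ob V. \<forall>Y\<in>ob V. \<forall>Z\<in>ob V. \<forall>X'\<in>ob V. \<forall>Y'\<in>ob V. \<forall>Z'\<in>ob V.
          \<forall>f\<in>hom V X Y. \<forall>g\<in>hom V Y Z. \<forall>f'\<in>hom V X' Y'. \<forall>g'\<in>hom V Y' Z'.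
          tar V (cmp V g f) (cmp V g' f') = cmp V (tar V g g') (tar V f f')) \<and>
      \<comment> \<open>braiding: natural isomorphism satisfying the (strict) hexagon axioms\<close>
      (\<forall>X\<in>ob V. \<forall>Y\<in>ob V. br V X Y \<in> hom V (tob V X Y) (tob V Y X)) \<and>
      (\<forall>X\<in>ob V. \<forall>Y\<in>ob V. \<exists>g\<in>hom V (tob V Y X) (tob V X Y).
          cmp V g (br V X Y) = ident V (tob V X Y) \<and>
          cmp V (br V X Y) g = ident V (tob V Y X)) \<and>
      (\<forall>X\<in>ob V. \<forall>X'\<in>ob V. \<forall>Y\<in>ob V. \<forall>Y'\<in>ob V. \<forall>f\<in>hom V X X'. \<forall>g\<in>hom V Y Y'.
          cmp V (br V X' Y') (tar V f g) = cmp V (tar V g f) (br V X Y)) \<and>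
      (\<forall>X\<in>ob V. \<forall>Y\<in>ob V. \<forall>Z\<in>ob V.
          br V X (tob V Y Z) = cmp V (tar V (ident V Y) (br V X Z)) (tar V (br V X Y) (ident V Z))) \<and>
      (\<forall>X\<in>ob V. \<forall>Y\<in>ob V. \<forall>Z\<in>ob V.
          br V (tob V X Y) Z = cmp V (tar V (br V X Z) (ident V Y)) (tar V (ident V X) (br V Y Z))))"

definition is_monoid :: "('o, 'm, 'x) bmcat_scheme \<Rightarrow> 'o \<Rightarrow> 'm \<Rightarrow> 'm \<Rightarrow> bool" where
  "is_monoid V M mu eta \<longleftrightarrow>
     M \<in> ob V \<and> mu \<in> hom V (tob V M M) M \<and> eta \<in> hom V (unitob V) M \<and>
     cmp V mu (tar V mu (ident V M)) = cmp V mu (tar V (ident V M) mu) \<and>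
     cmp V mu (tar V eta (ident V M)) = ident V M \<and>
     cmp V mu (tar V (ident V M) eta) = ident V M"

definition is_comonoid :: "('o, 'm, 'x) bmcat_scheme \<Rightarrow> 'o \<Rightarrow> 'm \<Rightarrow> 'm \<Rightarrow> bool" where
  "is_comonoid V C dl ep \<longleftrightarrow>
     C \<in> ob V \<and> dl \<in> hom V C (tob V C C) \<and> ep \<in> hom V C (unitob V) \<and>
     cmp V (tar V dl (ident V C)) dl = cmp V (tar V (ident V C) dl) dl \<and>
     cmp V (tar V ep (ident V C)) dl = ident V C \<and>
     cmp V (tar V (ident V C) ep) dl = ident V C"

text \<open>Multiplication of the tensor product monoid M \<otimes> N:
  (mu_M \<otimes> mu_N) \<circ> (1_M \<otimes> c_{N,M} \<otimes> 1_N); its unit is eta_M \<otimes> eta_N.\<close>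

definition tmult :: "('o, 'm, 'x) bmcat_scheme \<Rightarrow> 'o \<Rightarrow> 'm \<Rightarrow> 'o \<Rightarrow> 'm \<Rightarrow> 'm" where
  "tmult V M muM N muN =
     cmp V (tar V muM muN) (tar V (tar V (ident V M) (br V N M)) (ident V N))"

definition monoid_hom ::
  "('o, 'm, 'x) bmcat_scheme \<Rightarrow> 'o \<Rightarrow> 'm \<Rightarrow> 'm \<Rightarrow> 'o \<Rightarrow> 'm \<Rightarrow> 'm \<Rightarrow> 'm \<Rightarrow> bool" where
  "monoid_hom V M muM etaM N muN etaN f \<longleftrightarrow>
     f \<in> hom V M N \<and>
     cmp V f muM = cmp V muN (tar V f f) \<and>
     cmp V f etaM = etaN"

definition is_bimonoid ::
  "('o, 'm, 'x) bmcat_scheme \<Rightarrow> 'o \<Rightarrow> 'm \<Rightarrow> 'm \<Rightarrow> 'm \<Rightarrow> 'm \<Rightarrow> bool" where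
  "is_bimonoid V B mu eta dl ep \<longleftrightarrow>
     is_monoid V B mu eta \<and> is_comonoid V B dl ep \<and>
     monoid_hom V B mu eta (tob V B B) (tmult V B mu B mu) (tar V eta eta) dl \<and>
     monoid_hom V B mu eta (unitob V) (ident V (unitob V)) (ident V (unitob V)) ep"

definition dotp :: "('o, 'm, 'x) bmcat_scheme \<Rightarrow> 'm \<Rightarrow> 'm \<Rightarrow> 'm \<Rightarrow> 'm" where
  "dotp V muM u v = cmp V muM (tar V u v)"

text \<open>The monoid A \<otimes> B \<otimes> B is ((A \<otimes> B) \<otimes> B), and A \<otimes> B^3 is (((A \<otimes> B) \<otimes> B) \<otimes> B).\<close>

definition twisted_coaction ::
  "('o, 'm, 'x) bmcat_scheme \<Rightarrow> 'o \<Rightarrow> 'm \<Rightarrow> 'm \<Rightarrow> 'o \<Rightarrow> 'm \<Rightarrow> 'm \<Rightarrow> 'm \<Rightarrow> 'm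
     \<Rightarrow> 'm \<Rightarrow> 'm \<Rightarrow> bool" where
  "twisted_coaction V A muA etaA B muB etaB dl ep gam tau \<longleftrightarrow>
     (let AB = tob V A B; muAB = tmult V A muA B muB;
          ABB = tob V AB B; muABB = tmult V AB muAB B muB;
          muABBB = tmult V ABB muABB B muB;
          iA = ident V A; iB = ident V B in
     monoid_hom V A muA etaA AB muAB (tar V etaA etaB) gam \<and>
     tau \<in> hom V (unitob V) ABB \<and>
     cmp V (tar V iA ep) gam = iA \<and>
     dotp V muABB tau (cmp V (tar V gam iB) gam) =
       dotp V muABB (cmp V (tar V iA dl) gam) tau \<and>
     dotp V muABBB (cmp V (tar V (tar V iA dl) iB) tau) (tar V tau etaB) =
       dotp V muABBB (cmp V (tar V (ident V AB) dl) tau)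
                     (cmp V (tar V gam (ident V (tob V B B))) tau) \<and>
     cmp V (tar V (ident V AB) ep) tau = tar V etaA etaB \<and>
     cmp V (tar V (tar V iA ep) iB) tau = tar V etaA etaB)"

definition mixed_opwreath ::
  "('o, 'm, 'x) bmcat_scheme \<Rightarrow> 'o \<Rightarrow> 'm \<Rightarrow> 'm \<Rightarrow> 'o \<Rightarrow> 'm \<Rightarrow> 'm \<Rightarrow> 'm \<Rightarrow> bool" where
  "mixed_opwreath V A m j C d w z \<longleftrightarrow>
     (let iA = ident V A; iC = ident V C; iCC = ident V (tob V C C);
          iCCC = ident V (tob V C (tob V C C)) in
     C \<in> ob V \<and>
     d \<in> hom V C (tob V A (tob V C C)) \<and>
     w \<in> hom V C A \<and>
     z \<in> hom V (tob V C A) (tob V A C) \<and>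
     \<comment> \<open>(1)\<close>
     cmp V z (tar V iC m) = cmp V (tar V m iC) (cmp V (tar V iA z) (tar V z iA)) \<and>
     \<comment> \<open>(2)\<close>
     cmp V z (tar V iC j) = tar V j iC \<and>
     \<comment> \<open>(3)\<close>
     cmp V m (tar V w iA) = cmp V m (cmp V (tar V iA w) z) \<and>
     \<comment> \<open>(4)\<close>
     cmp V (tar V m iCC) (cmp V (tar V (tar V iA z) iC)
        (cmp V (tar V (tar V iA iC) z) (tar V d iA))) =
       cmp V (tar V m iCC) (cmp V (tar V iA d) z) \<and>
     \<comment> \<open>(5)\<close>
     cmp V (tar V m iCCC) (cmp V (tar V (tar V iA d) iC) d) =
       cmp V (tar V m iCCC) (cmp V (tar V (tar V iA z) iCC) (cmp V (tar V (tar V iA iC) d) d)) \<and>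
     \<comment> \<open>(6)\<close>
     cmp V (tar V m iC) (cmp V (tar V (tar V iA w) iC) d) = tar V j iC \<and>
     \<comment> \<open>(7)\<close>
     cmp V (tar V m iC) (cmp V (tar V iA z) (cmp V (tar V (tar V iA iC) w) d)) = tar V j iC)"

end

theory Submission
  imports Defs
begin

text \<open>Everything reduces to calculations with dot products. Composing with the multiplication of
\<open>A\<close> turns the composites occurring in the opwreath axioms into dot products in the tensor
monoids \<open>A \<otimes> B\<close>, \<open>A \<otimes> B \<otimes> B\<close> and \<open>A \<otimes> B \<otimes> B \<otimes> B\<close>; for instance
\<open>(m \<otimes> 1) \<circ> (1 \<otimes> z) = 1 \<bullet> \<gamma>\<close> and \<open>(m \<otimes> 1) \<circ> (1 \<otimes> d) = (1 \<otimes> \<delta>) \<bullet> \<tau>\<close>.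
Axioms (1) and (2) then express that \<open>\<gamma>\<close> is a monoid morphism, (3), (6) and (7) follow from
counitality and normality, (4) from \<open>\<tau>\<close>-coassociativity, and (5) from the 2-cocycle condition
together with coassociativity of \<open>\<delta>\<close>. The braiding enters only through the facts that the
tensor product of two monoids is a monoid, that this product is associative, and that
\<open>c\<^sub>X\<^sub>,\<^sub>I\<close> and \<open>c\<^sub>I\<^sub>,\<^sub>X\<close> are identities.\<close>

section \<open>Strict braided monoidal categories\<close>

locale braided_monoidal =
  fixes V :: "('o, 'm, 'x) bmcat_scheme"
  assumes braided: "braided_moncat V"
begin

abbreviation comp_V (infixr "\<cdot>" 55) where "g \<cdot> f \<equiv> cmp V g f"
abbreviation tensor_V (infixr "\<otimes>" 60) where "f \<otimes> g \<equiv> tar V f g"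
abbreviation tensor_ob_V (infixr "\<boxtimes>" 60) where "X \<boxtimes> Y \<equiv> tob V X Y"
abbreviation "I \<equiv> unitob V"
abbreviation "idm \<equiv> ident V"
abbreviation "c \<equiv> br V"

definition arr :: "'m \<Rightarrow> 'o \<Rightarrow> 'o \<Rightarrow> bool" where
  "arr f X Y \<longleftrightarrow> X \<in> ob V \<and> Y \<in> ob V \<and> f \<in> hom V X Y"

lemmas braided_moncat_conjuncts = braided[unfolded braided_moncat_def]

lemma ob_unit[simp]: "I \<in> ob V" using braided_moncat_conjuncts by (elim conjE) (simp only: Ball_def)
lemma ob_tensor[simp]: "X \<in> ob V \<Longrightarrow> Y \<in> ob V \<Longrightarrow> X \<boxtimes> Y \<in> ob V"
  using braided_moncat_conjuncts by (elim conjE) (simp only: Ball_def)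
lemma tensor_ob_assoc[simp]: "X \<in> ob V \<Longrightarrow> Y \<in> ob V \<Longrightarrow> Z \<in> ob V \<Longrightarrow> (X \<boxtimes> Y) \<boxtimes> Z = X \<boxtimes> (Y \<boxtimes> Z)"
  using braided_moncat_conjuncts by (elim conjE) (simp only: Ball_def)
lemma tensor_ob_unit_left[simp]: "X \<in> ob V \<Longrightarrow> I \<boxtimes> X = X"
  using braided_moncat_conjuncts by (elim conjE) (simp only: Ball_def)
lemma tensor_ob_unit_right[simp]: "X \<in> ob V \<Longrightarrow> X \<boxtimes> I = X"
  using braided_moncat_conjuncts by (elim conjE) (simp only: Ball_def)

lemma arr_comp: "arr f X Y \<Longrightarrow> arr g Y Z \<Longrightarrow> arr (g \<cdot> f) X Z"
  using braided_moncat_conjuncts unfolding arr_def by (elim conjE) (simp only: Ball_def)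
lemma arr_ident: "X \<in> ob V \<Longrightarrow> arr (idm X) X X"
  using braided_moncat_conjuncts unfolding arr_def by (elim conjE) (simp only: Ball_def)
lemma arr_tensor: "arr f X X' \<Longrightarrow> arr g Y Y' \<Longrightarrow> arr (f \<otimes> g) (X \<boxtimes> Y) (X' \<boxtimes> Y')"
  using braided_moncat_conjuncts unfolding arr_def by (elim conjE) (simp only: Ball_def)
lemma arr_braid: "X \<in> ob V \<Longrightarrow> Y \<in> ob V \<Longrightarrow> arr (c X Y) (X \<boxtimes> Y) (Y \<boxtimes> X)"
  using braided_moncat_conjuncts unfolding arr_def by (elim conjE) (simp only: Ball_def)

lemma comp_assoc: "arr f W X \<Longrightarrow> arr g X Y \<Longrightarrow> arr h Y Z \<Longrightarrow> h \<cdot> (g \<cdot> f) = (h \<cdot> g) \<cdot> f"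
  using braided_moncat_conjuncts unfolding arr_def by (elim conjE) (simp only: Ball_def)
lemma comp_ident_left: "arr f X Y \<Longrightarrow> idm Y \<cdot> f = f"
  using braided_moncat_conjuncts unfolding arr_def by (elim conjE) (simp only: Ball_def)
lemma comp_ident_right: "arr f X Y \<Longrightarrow> f \<cdot> idm X = f"
  using braided_moncat_conjuncts unfolding arr_def by (elim conjE) (simp only: Ball_def)
lemma tensor_assoc: "arr f X X' \<Longrightarrow> arr g Y Y' \<Longrightarrow> arr h Z Z' \<Longrightarrow> (f \<otimes> g) \<otimes> h = f \<otimes> (g \<otimes> h)"
  using braided_moncat_conjuncts unfolding arr_def by (elim conjE) (simp only: Ball_def)
lemma unit_tensor: "arr f X Y \<Longrightarrow> idm I \<otimes> f = f"
  using braided_moncat_conjuncts unfolding arr_def by (elim conjE) (simp only: Ball_def)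
lemma tensor_unit: "arr f X Y \<Longrightarrow> f \<otimes> idm I = f"
  using braided_moncat_conjuncts unfolding arr_def by (elim conjE) (simp only: Ball_def)
lemma tensor_ident: "X \<in> ob V \<Longrightarrow> Y \<in> ob V \<Longrightarrow> idm X \<otimes> idm Y = idm (X \<boxtimes> Y)"
  using braided_moncat_conjuncts unfolding arr_def by (elim conjE) (simp only: Ball_def)
lemma interchange: "arr f X Y \<Longrightarrow> arr g Y Z \<Longrightarrow> arr f' X' Y' \<Longrightarrow> arr g' Y' Z' \<Longrightarrow>
   (g \<cdot> f) \<otimes> (g' \<cdot> f') = (g \<otimes> g') \<cdot> (f \<otimes> f')"
  using braided_moncat_conjuncts unfolding arr_def by (elim conjE) (simp only: Ball_def)
lemma braid_natural: "arr f X X' \<Longrightarrow> arr g Y Y' \<Longrightarrow> c X' Y' \<cdot> (f \<otimes> g) = (g \<otimes> f) \<cdot> c X Y"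
  using braided_moncat_conjuncts unfolding arr_def by (elim conjE) (simp only: Ball_def)
lemma braid_tensor_right: "X \<in> ob V \<Longrightarrow> Y \<in> ob V \<Longrightarrow> Z \<in> ob V \<Longrightarrow> c X (Y \<boxtimes> Z) = (idm Y \<otimes> c X Z) \<cdot> (c X Y \<otimes> idm Z)"
  using braided_moncat_conjuncts by (elim conjE) (simp only: Ball_def)
lemma braid_tensor_left: "X \<in> ob V \<Longrightarrow> Y \<in> ob V \<Longrightarrow> Z \<in> ob V \<Longrightarrow> c (X \<boxtimes> Y) Z = (c X Z \<otimes> idm Y) \<cdot> (idm X \<otimes> c Y Z)"
  using braided_moncat_conjuncts by (elim conjE) (simp only: Ball_def)
lemma braid_left_inverse: "X \<in> ob V \<Longrightarrow> Y \<in> ob V \<Longrightarrow> \<exists>g. arr g (Y \<boxtimes> X) (X \<boxtimes> Y) \<and> g \<cdot> c X Y = idm (X \<boxtimes> Y)"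
  using braided_moncat_conjuncts unfolding arr_def by (meson ob_tensor)

lemma arrD: "arr f X Y \<Longrightarrow> X \<in> ob V" "arr f X Y \<Longrightarrow> Y \<in> ob V"
  by (auto simp: arr_def)

lemma arr_tensor': "arr f X X' \<Longrightarrow> arr g Y Y' \<Longrightarrow> P = X \<boxtimes> Y \<Longrightarrow> Q = X' \<boxtimes> Y' \<Longrightarrow> arr (f \<otimes> g) P Q"
  using arr_tensor by simp
lemma arr_ident': "X \<in> ob V \<Longrightarrow> P = X \<Longrightarrow> Q = X \<Longrightarrow> arr (idm X) P Q"
  using arr_ident by simp
lemma arr_braid': "X \<in> ob V \<Longrightarrow> Y \<in> ob V \<Longrightarrow> P = X \<boxtimes> Y \<Longrightarrow> Q = Y \<boxtimes> X \<Longrightarrow> arr (c X Y) P Q"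
  using arr_braid by simp

text \<open>Objects are only equal up to the strict associativity and unit laws, so the typing rules
take their source and target as equations, to be discharged by \<open>simp\<close>.\<close>
lemmas arr_intros = arr_comp arr_tensor' arr_ident' arr_braid'

lemma ident_tensor_comp:
  assumes "W \<in> ob V" "arr f X Y" "arr g Y Z"
  shows "idm W \<otimes> (g \<cdot> f) = (idm W \<otimes> g) \<cdot> (idm W \<otimes> f)"
  using interchange[OF arr_ident arr_ident assms(2,3)] comp_ident_left[OF arr_ident] assms(1) by simp

lemma comp_tensor_ident:
  assumes "W \<in> ob V" "arr f X Y" "arr g Y Z"
  shows "(g \<cdot> f) \<otimes> idm W = (g \<otimes> idm W) \<cdot> (f \<otimes> idm W)"
  using interchange[OF assms(2,3) arr_ident arr_ident] comp_ident_left[OF arr_ident] assms(1) by simp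

lemma tensor_ident_comp_ident_tensor:
  assumes "arr f X X'" "arr g Y Y'"
  shows "(f \<otimes> idm Y') \<cdot> (idm X \<otimes> g) = f \<otimes> g"
  using interchange[OF arr_ident assms(1) assms(2) arr_ident] assms arrD
  by (simp add: comp_ident_left comp_ident_right)

lemma ident_tensor_comp_tensor_ident:
  assumes "arr f X X'" "arr g Y Y'"
  shows "(idm X' \<otimes> g) \<cdot> (f \<otimes> idm Y) = f \<otimes> g"
  using interchange[OF assms(1) arr_ident arr_ident assms(2)] assms arrD
  by (simp add: comp_ident_left comp_ident_right)

lemma idempotent_left_invertible_eq_ident:
  assumes "arr e X X" "arr g X X" "e \<cdot> e = e" "g \<cdot> e = idm X"
  shows "e = idm X"
proof -
  have "idm X = g \<cdot> (e \<cdot> e)" using assms by simp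
  also have "\<dots> = (g \<cdot> e) \<cdot> e" by (rule comp_assoc) (use assms in auto)
  also have "\<dots> = e" using assms comp_ident_left by simp
  finally show ?thesis by simp
qed

text \<open>The hexagon axioms with two unit objects show that \<open>c\<^sub>X\<^sub>,\<^sub>I\<close> and \<open>c\<^sub>I\<^sub>,\<^sub>X\<close>
are idempotent; being invertible, they are identities.\<close>

lemma braid_unit_right:
  assumes X: "X \<in> ob V"
  shows "c X I = idm X"
proof -
  have a: "arr (c X I) X X" using arr_braid[of X I] X by simp
  have "c X (I \<boxtimes> I) = (idm I \<otimes> c X I) \<cdot> (c X I \<otimes> idm I)"
    by (rule braid_tensor_right) (simp_all add: X)
  hence e: "c X I = c X I \<cdot> c X I" using a unit_tensor[OF a] tensor_unit[OF a] by simp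
  obtain g where g: "arr g (I \<boxtimes> X) (X \<boxtimes> I)" "g \<cdot> c X I = idm (X \<boxtimes> I)"
    using braid_left_inverse[of X I] X by auto
  show ?thesis by (rule idempotent_left_invertible_eq_ident[OF a _ e[symmetric]]) (use g X in auto)
qed

lemma braid_unit_left:
  assumes X: "X \<in> ob V"
  shows "c I X = idm X"
proof -
  have a: "arr (c I X) X X" using arr_braid[of I X] X by simp
  have "c (I \<boxtimes> I) X = (c I X \<otimes> idm I) \<cdot> (idm I \<otimes> c I X)"
    by (rule braid_tensor_left) (simp_all add: X)
  hence e: "c I X = c I X \<cdot> c I X" using a unit_tensor[OF a] tensor_unit[OF a] by simp
  obtain g where g: "arr g (X \<boxtimes> I) (I \<boxtimes> X)" "g \<cdot> c I X = idm (I \<boxtimes> X)"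
    using braid_left_inverse[of I X] X by auto
  show ?thesis by (rule idempotent_left_invertible_eq_ident[OF a _ e[symmetric]]) (use g X in auto)
qed

section \<open>Monoids and the dot product\<close>

lemma monoidD:
  assumes "is_monoid V M mu eta"
  shows "M \<in> ob V" and "arr mu (M \<boxtimes> M) M" and "arr eta I M"
    and "mu \<cdot> (mu \<otimes> idm M) = mu \<cdot> (idm M \<otimes> mu)"
    and "mu \<cdot> (eta \<otimes> idm M) = idm M"
    and "mu \<cdot> (idm M \<otimes> eta) = idm M"
  using assms unfolding is_monoid_def arr_def by auto

lemma monoid_homD:
  assumes "monoid_hom V M mu eta N nu th h"
  shows "M \<in> ob V \<Longrightarrow> N \<in> ob V \<Longrightarrow> arr h M N"
    and "h \<cdot> mu = nu \<cdot> (h \<otimes> h)"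
    and "h \<cdot> eta = th"
  using assms unfolding monoid_hom_def arr_def by auto

lemma monoid_hom_ident:
  assumes "is_monoid V M mu eta"
  shows "monoid_hom V M mu eta M mu eta (idm M)"
proof -
  note m = monoidD[OF assms]
  have "idm M \<cdot> mu = mu" by (rule comp_ident_left[OF m(2)])
  moreover have "mu \<cdot> (idm M \<otimes> idm M) = mu"
    using tensor_ident m(1) comp_ident_right[OF m(2)] by simp
  moreover have "idm M \<cdot> eta = eta" by (rule comp_ident_left[OF m(3)])
  ultimately show ?thesis unfolding monoid_hom_def using arr_ident[OF m(1)] arr_def by auto
qed

lemma arr_dotp:
  "arr u X M \<Longrightarrow> arr v Y M \<Longrightarrow> arr mu Q M \<Longrightarrow> Q = M \<boxtimes> M \<Longrightarrow> P = X \<boxtimes> Y \<Longrightarrow> arr (dotp V mu u v) P M"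
  unfolding dotp_def by (rule arr_intros | simp)+

lemma dotp_comp_tensor:
  assumes "arr u X M" "arr v Y M" "arr mu (M \<boxtimes> M) M" "arr f X' X" "arr g Y' Y"
  shows "dotp V mu u v \<cdot> (f \<otimes> g) = dotp V mu (u \<cdot> f) (v \<cdot> g)"
proof -
  have "dotp V mu u v \<cdot> (f \<otimes> g) = mu \<cdot> ((u \<otimes> v) \<cdot> (f \<otimes> g))" unfolding dotp_def
    by (rule comp_assoc[symmetric]) (rule arr_intros assms | simp)+
  also have "(u \<otimes> v) \<cdot> (f \<otimes> g) = (u \<cdot> f) \<otimes> (v \<cdot> g)"
    by (rule interchange[symmetric]) (rule arr_intros assms | simp)+
  finally show ?thesis unfolding dotp_def .
qed

lemma dotp_assoc:
  assumes M: "is_monoid V M mu eta" and a: "arr u X M" "arr v Y M" "arr w Z M"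
  shows "dotp V mu (dotp V mu u v) w = dotp V mu u (dotp V mu v w)"
proof -
  note m = monoidD[OF M]
  have "dotp V mu (dotp V mu u v) w = mu \<cdot> ((mu \<cdot> (u \<otimes> v)) \<otimes> (idm M \<cdot> w))"
    unfolding dotp_def using comp_ident_left[OF a(3)] by simp
  also have "(mu \<cdot> (u \<otimes> v)) \<otimes> (idm M \<cdot> w) = (mu \<otimes> idm M) \<cdot> ((u \<otimes> v) \<otimes> w)"
    by (rule interchange) (rule arr_intros a m | simp)+
  also have "mu \<cdot> ((mu \<otimes> idm M) \<cdot> ((u \<otimes> v) \<otimes> w)) = (mu \<cdot> (mu \<otimes> idm M)) \<cdot> ((u \<otimes> v) \<otimes> w)"
    by (rule comp_assoc) (rule arr_intros a m | simp)+
  also have "(u \<otimes> v) \<otimes> w = u \<otimes> (v \<otimes> w)" by (rule tensor_assoc) (rule a)+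
  also have "mu \<cdot> (mu \<otimes> idm M) = mu \<cdot> (idm M \<otimes> mu)" by (rule m)
  also have "(mu \<cdot> (idm M \<otimes> mu)) \<cdot> (u \<otimes> (v \<otimes> w)) = mu \<cdot> ((idm M \<otimes> mu) \<cdot> (u \<otimes> (v \<otimes> w)))"
    by (rule comp_assoc[symmetric]) (rule arr_intros a m | simp)+
  also have "(idm M \<otimes> mu) \<cdot> (u \<otimes> (v \<otimes> w)) = (idm M \<cdot> u) \<otimes> (mu \<cdot> (v \<otimes> w))"
    by (rule interchange[symmetric]) (rule arr_intros a m | simp)+
  also have "idm M \<cdot> u = u" by (rule comp_ident_left[OF a(1)])
  finally show ?thesis unfolding dotp_def .
qed

lemma dotp_unit_left:
  assumes M: "is_monoid V M mu eta" and a: "arr u X M"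
  shows "dotp V mu eta u = u"
proof -
  note m = monoidD[OF M]
  have "dotp V mu eta u = mu \<cdot> ((eta \<cdot> idm I) \<otimes> (idm M \<cdot> u))"
    unfolding dotp_def using comp_ident_left[OF a] comp_ident_right[OF m(3)] by simp
  also have "(eta \<cdot> idm I) \<otimes> (idm M \<cdot> u) = (eta \<otimes> idm M) \<cdot> (idm I \<otimes> u)"
    by (rule interchange) (rule arr_intros a m | simp)+
  also have "mu \<cdot> ((eta \<otimes> idm M) \<cdot> (idm I \<otimes> u)) = (mu \<cdot> (eta \<otimes> idm M)) \<cdot> (idm I \<otimes> u)"
    by (rule comp_assoc) (rule arr_intros a m | simp)+
  also have "idm I \<otimes> u = u" by (rule unit_tensor[OF a])
  finally show ?thesis using m comp_ident_left[OF a] by simp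
qed

lemma dotp_unit_right:
  assumes M: "is_monoid V M mu eta" and a: "arr u X M"
  shows "dotp V mu u eta = u"
proof -
  note m = monoidD[OF M]
  have "dotp V mu u eta = mu \<cdot> ((idm M \<cdot> u) \<otimes> (eta \<cdot> idm I))"
    unfolding dotp_def using comp_ident_left[OF a] comp_ident_right[OF m(3)] by simp
  also have "(idm M \<cdot> u) \<otimes> (eta \<cdot> idm I) = (idm M \<otimes> eta) \<cdot> (u \<otimes> idm I)"
    by (rule interchange) (rule arr_intros a m | simp)+
  also have "mu \<cdot> ((idm M \<otimes> eta) \<cdot> (u \<otimes> idm I)) = (mu \<cdot> (idm M \<otimes> eta)) \<cdot> (u \<otimes> idm I)"
    by (rule comp_assoc) (rule arr_intros a m | simp)+
  also have "u \<otimes> idm I = u" by (rule tensor_unit[OF a])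
  finally show ?thesis using m comp_ident_left[OF a] by simp
qed

lemma monoid_hom_dotp:
  assumes h: "monoid_hom V M mu eta N nu th h"
    and a: "arr mu (M \<boxtimes> M) M" "arr nu (N \<boxtimes> N) N" "arr u X M" "arr v Y M"
  shows "h \<cdot> dotp V mu u v = dotp V nu (h \<cdot> u) (h \<cdot> v)"
proof -
  have ha: "arr h M N" using monoid_homD(1)[OF h] arrD a by blast
  have "h \<cdot> dotp V mu u v = (h \<cdot> mu) \<cdot> (u \<otimes> v)" unfolding dotp_def
    by (rule comp_assoc) (rule arr_intros a ha | simp)+
  also have "h \<cdot> mu = nu \<cdot> (h \<otimes> h)" by (rule monoid_homD(2)[OF h])
  also have "(nu \<cdot> (h \<otimes> h)) \<cdot> (u \<otimes> v) = nu \<cdot> ((h \<otimes> h) \<cdot> (u \<otimes> v))"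
    by (rule comp_assoc[symmetric]) (rule arr_intros a ha | simp)+
  also have "(h \<otimes> h) \<cdot> (u \<otimes> v) = (h \<cdot> u) \<otimes> (h \<cdot> v)"
    by (rule interchange[symmetric]) (rule arr_intros a ha | simp)+
  finally show ?thesis unfolding dotp_def .
qed

section \<open>The tensor product of monoids\<close>

lemma arr_tmult:
  assumes "arr mu (M \<boxtimes> M) M" "arr nu (N \<boxtimes> N) N"
  shows "arr (tmult V M mu N nu) ((M \<boxtimes> N) \<boxtimes> (M \<boxtimes> N)) (M \<boxtimes> N)"
proof -
  have ob: "M \<in> ob V" "N \<in> ob V" using assms arrD by auto
  show ?thesis unfolding tmult_def by (rule arr_intros assms | simp add: ob)+
qed

text \<open>The hypothesis on the braiding holds whenever \<open>Y\<close> or \<open>X'\<close> is the unit object,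
which is the only case needed.\<close>
lemma tmult_dotp_tensor:
  assumes M: "is_monoid V M mu eta" and N: "is_monoid V N nu th"
    and a: "arr u X M" "arr v Y N" "arr u' X' M" "arr v' Y' N"
    and br: "c Y X' = idm (X' \<boxtimes> Y)"
  shows "dotp V (tmult V M mu N nu) (u \<otimes> v) (u' \<otimes> v') = dotp V mu u u' \<otimes> dotp V nu v v'"
proof -
  note m = monoidD[OF M] and n = monoidD[OF N]
  note ob = arrD(1,2)[OF a(1)] arrD(1,2)[OF a(2)] arrD(1,2)[OF a(3)] arrD(1,2)[OF a(4)]
  have "dotp V (tmult V M mu N nu) (u \<otimes> v) (u' \<otimes> v') =
     (mu \<otimes> nu) \<cdot> (((idm M \<otimes> c N M) \<otimes> idm N) \<cdot> ((u \<otimes> v) \<otimes> (u' \<otimes> v')))"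
    unfolding dotp_def tmult_def
    by (rule comp_assoc[symmetric]) (rule arr_intros a m n | simp add: ob)+
  also have "(u \<otimes> v) \<otimes> (u' \<otimes> v') = u \<otimes> (v \<otimes> (u' \<otimes> v'))"
    by (rule tensor_assoc) (rule arr_intros a | simp add: ob)+
  also have "v \<otimes> (u' \<otimes> v') = (v \<otimes> u') \<otimes> v'"
    by (rule tensor_assoc[symmetric]) (rule arr_intros a | simp add: ob)+
  also have "u \<otimes> ((v \<otimes> u') \<otimes> v') = (u \<otimes> (v \<otimes> u')) \<otimes> v'" 
    by (rule tensor_assoc[symmetric]) (rule arr_intros a | simp)+
  also have "((idm M \<otimes> c N M) \<otimes> idm N) \<cdot> ((u \<otimes> (v \<otimes> u')) \<otimes> v') =
       ((idm M \<otimes> c N M) \<cdot> (u \<otimes> (v \<otimes> u'))) \<otimes> (idm N \<cdot> v')"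
    by (rule interchange[symmetric]) (rule arr_intros a m n | simp add: ob)+
  also have "(idm M \<otimes> c N M) \<cdot> (u \<otimes> (v \<otimes> u')) = (idm M \<cdot> u) \<otimes> (c N M \<cdot> (v \<otimes> u'))"
    by (rule interchange[symmetric]) (rule arr_intros a m n | simp add: ob)+
  also have "c N M \<cdot> (v \<otimes> u') = (u' \<otimes> v) \<cdot> c Y X'"
    by (rule braid_natural) (rule arr_intros a | simp add: ob)+
  also have "(u' \<otimes> v) \<cdot> c Y X' = u' \<otimes> v" using br comp_ident_right[OF arr_tensor[OF a(3) a(2)]] by simp
  also have "idm M \<cdot> u = u" by (rule comp_ident_left[OF a(1)])
  also have "idm N \<cdot> v' = v'" by (rule comp_ident_left[OF a(4)])
  also have "(u \<otimes> (u' \<otimes> v)) \<otimes> v' = u \<otimes> ((u' \<otimes> v) \<otimes> v')"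
    by (rule tensor_assoc) (rule arr_intros a | simp)+
  also have "(u' \<otimes> v) \<otimes> v' = u' \<otimes> (v \<otimes> v')"
    by (rule tensor_assoc) (rule arr_intros a | simp add: ob)+
  also have "u \<otimes> (u' \<otimes> (v \<otimes> v')) = (u \<otimes> u') \<otimes> (v \<otimes> v')"
    by (rule tensor_assoc[symmetric]) (rule arr_intros a | simp)+
  also have "(mu \<otimes> nu) \<cdot> ((u \<otimes> u') \<otimes> (v \<otimes> v')) = (mu \<cdot> (u \<otimes> u')) \<otimes> (nu \<cdot> (v \<otimes> v'))"
    by (rule interchange[symmetric]) (rule arr_intros a m n | simp add: ob)+
  finally show ?thesis unfolding dotp_def .
qed

text \<open>In the associativity law for \<open>tmult\<close> the two bracketings produce two different
composites of braidings; by the hexagon axioms both equal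
\<open>((1 \<otimes> c) \<otimes> 1) \<circ> (c \<otimes> c \<otimes> 1)\<close>.\<close>

lemma braid_tensor_left_whiskered:
  assumes ob: "M \<in> ob V" "N \<in> ob V"
  shows "(idm M \<otimes> (c (N \<boxtimes> N) M \<otimes> idm N)) \<cdot> (c N M \<otimes> idm (N \<boxtimes> M \<boxtimes> N))
    = ((idm M \<otimes> c N M) \<otimes> idm (N \<boxtimes> N)) \<cdot> (c N M \<otimes> (c N M \<otimes> idm N))"
proof -
  let ?S = "c N M"
  have "c (N \<boxtimes> N) M \<otimes> idm N = ((?S \<otimes> idm N) \<otimes> idm N) \<cdot> ((idm N \<otimes> ?S) \<otimes> idm N)"
    unfolding braid_tensor_left[OF ob(2,2,1)] by (rule comp_tensor_ident) (rule arr_intros | simp add: ob)+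
  then have A: "idm M \<otimes> (c (N \<boxtimes> N) M \<otimes> idm N)
      = (idm M \<otimes> ((?S \<otimes> idm N) \<otimes> idm N)) \<cdot> (idm M \<otimes> ((idm N \<otimes> ?S) \<otimes> idm N))"
    by (simp only:) (rule ident_tensor_comp; (rule arr_intros | simp add: ob)+)
  have B: "idm M \<otimes> ((idm N \<otimes> ?S) \<otimes> idm N) = idm (M \<boxtimes> N) \<otimes> (?S \<otimes> idm N)"
  proof -
    have "idm M \<otimes> ((idm N \<otimes> ?S) \<otimes> idm N) = idm M \<otimes> (idm N \<otimes> (?S \<otimes> idm N))"
      by (subst tensor_assoc) (rule arr_intros | simp add: ob)+
    also have "\<dots> = (idm M \<otimes> idm N) \<otimes> (?S \<otimes> idm N)"
      by (rule tensor_assoc[symmetric]) (rule arr_intros | simp add: ob)+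
    finally show ?thesis using tensor_ident ob by simp
  qed
  have AA: "idm M \<otimes> ((?S \<otimes> idm N) \<otimes> idm N) = (idm M \<otimes> ?S) \<otimes> idm (N \<boxtimes> N)"
  proof -
    have "(?S \<otimes> idm N) \<otimes> idm N = ?S \<otimes> (idm N \<otimes> idm N)"
      by (rule tensor_assoc) (rule arr_intros | simp add: ob)+
    moreover have "(idm M \<otimes> ?S) \<otimes> (idm N \<otimes> idm N) = idm M \<otimes> (?S \<otimes> (idm N \<otimes> idm N))"
      by (rule tensor_assoc) (rule arr_intros | simp add: ob)+
    ultimately show ?thesis using tensor_ident ob by simp
  qed
  have BC: "(idm (M \<boxtimes> N) \<otimes> (?S \<otimes> idm N)) \<cdot> (?S \<otimes> idm (N \<boxtimes> M \<boxtimes> N)) = ?S \<otimes> (?S \<otimes> idm N)"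
    by (rule ident_tensor_comp_tensor_ident) (rule arr_intros | simp add: ob)+
  have "(idm M \<otimes> (c (N \<boxtimes> N) M \<otimes> idm N)) \<cdot> (?S \<otimes> idm (N \<boxtimes> M \<boxtimes> N)) =
      (idm M \<otimes> ((?S \<otimes> idm N) \<otimes> idm N)) \<cdot> ((idm M \<otimes> ((idm N \<otimes> ?S) \<otimes> idm N)) \<cdot> (?S \<otimes> idm (N \<boxtimes> M \<boxtimes> N)))"
    unfolding A by (rule comp_assoc[symmetric]) (rule arr_intros | simp add: ob)+
  then show ?thesis using B BC AA by simp
qed

lemma braid_tensor_right_whiskered:
  assumes ob: "M \<in> ob V" "N \<in> ob V"
  shows "(c N (M \<boxtimes> M) \<otimes> idm (N \<boxtimes> N)) \<cdot> (idm (N \<boxtimes> M) \<otimes> (c N M \<otimes> idm N))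
    = ((idm M \<otimes> c N M) \<otimes> idm (N \<boxtimes> N)) \<cdot> (c N M \<otimes> (c N M \<otimes> idm N))"
proof -
  let ?S = "c N M"
  have A': "c N (M \<boxtimes> M) \<otimes> idm (N \<boxtimes> N) = ((idm M \<otimes> ?S) \<otimes> idm (N \<boxtimes> N)) \<cdot> ((?S \<otimes> idm M) \<otimes> idm (N \<boxtimes> N))"
    unfolding braid_tensor_right[OF ob(2,1,1)] by (rule comp_tensor_ident) (rule arr_intros | simp add: ob)+
  have B': "(?S \<otimes> idm M) \<otimes> idm (N \<boxtimes> N) = ?S \<otimes> idm (M \<boxtimes> N \<boxtimes> N)"
  proof -
    have "(?S \<otimes> idm M) \<otimes> idm (N \<boxtimes> N) = ?S \<otimes> (idm M \<otimes> idm (N \<boxtimes> N))"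
      by (rule tensor_assoc) (rule arr_intros | simp add: ob)+
    thus ?thesis using tensor_ident ob by simp
  qed
  have BC': "(?S \<otimes> idm (M \<boxtimes> N \<boxtimes> N)) \<cdot> (idm (N \<boxtimes> M) \<otimes> (?S \<otimes> idm N)) = ?S \<otimes> (?S \<otimes> idm N)"
    by (rule tensor_ident_comp_ident_tensor) (rule arr_intros | simp add: ob)+
  have "(c N (M \<boxtimes> M) \<otimes> idm (N \<boxtimes> N)) \<cdot> (idm (N \<boxtimes> M) \<otimes> (?S \<otimes> idm N)) =
      ((idm M \<otimes> ?S) \<otimes> idm (N \<boxtimes> N)) \<cdot> (((?S \<otimes> idm M) \<otimes> idm (N \<boxtimes> N)) \<cdot> (idm (N \<boxtimes> M) \<otimes> (?S \<otimes> idm N)))"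
    unfolding A' by (rule comp_assoc[symmetric]) (rule arr_intros | simp add: ob)+
  then show ?thesis using B' BC' by simp
qed

lemma tmult_assoc_braids:
  assumes ob: "M \<in> ob V" "N \<in> ob V"
  shows "(idm (M \<boxtimes> M) \<otimes> (c (N \<boxtimes> N) M \<otimes> idm N)) \<cdot> (((idm M \<otimes> c N M) \<otimes> idm N) \<otimes> idm (M \<boxtimes> N))
       = (idm M \<otimes> (c N (M \<boxtimes> M) \<otimes> idm (N \<boxtimes> N))) \<cdot> (idm (M \<boxtimes> N) \<otimes> ((idm M \<otimes> c N M) \<otimes> idm N))"
proof -
  let ?S = "c N M"
  have C: "((idm M \<otimes> ?S) \<otimes> idm N) \<otimes> idm (M \<boxtimes> N) = idm M \<otimes> (?S \<otimes> idm (N \<boxtimes> M \<boxtimes> N))"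
  proof -
    have "((idm M \<otimes> ?S) \<otimes> idm N) \<otimes> idm (M \<boxtimes> N) = (idm M \<otimes> ?S) \<otimes> (idm N \<otimes> idm (M \<boxtimes> N))"
      by (rule tensor_assoc) (rule arr_intros | simp add: ob)+
    also have "\<dots> = idm M \<otimes> (?S \<otimes> (idm N \<otimes> idm (M \<boxtimes> N)))"
      by (rule tensor_assoc) (rule arr_intros | simp add: ob)+
    finally show ?thesis using tensor_ident ob by simp
  qed
  have C': "idm (M \<boxtimes> N) \<otimes> ((idm M \<otimes> ?S) \<otimes> idm N) = idm M \<otimes> (idm (N \<boxtimes> M) \<otimes> (?S \<otimes> idm N))"
  proof -
    have "idm (M \<boxtimes> N) \<otimes> ((idm M \<otimes> ?S) \<otimes> idm N) = (idm M \<otimes> idm N) \<otimes> (idm M \<otimes> (?S \<otimes> idm N))"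
      using tensor_ident ob tensor_assoc[of "idm M" M M ?S "N \<boxtimes> M" "M \<boxtimes> N" "idm N" N N] arr_ident arr_braid by simp
    also have "\<dots> = idm M \<otimes> (idm N \<otimes> (idm M \<otimes> (?S \<otimes> idm N)))"
      by (rule tensor_assoc) (rule arr_intros | simp add: ob)+
    also have "idm N \<otimes> (idm M \<otimes> (?S \<otimes> idm N)) = (idm N \<otimes> idm M) \<otimes> (?S \<otimes> idm N)"
      by (rule tensor_assoc[symmetric]) (rule arr_intros | simp add: ob)+
    finally show ?thesis using tensor_ident ob by simp
  qed
  have "idm (M \<boxtimes> M) \<otimes> (c (N \<boxtimes> N) M \<otimes> idm N) = idm M \<otimes> (idm M \<otimes> (c (N \<boxtimes> N) M \<otimes> idm N))"
    unfolding tensor_ident[OF ob(1,1), symmetric] by (rule tensor_assoc) (rule arr_intros | simp add: ob)+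
  then have W1: "(idm (M \<boxtimes> M) \<otimes> (c (N \<boxtimes> N) M \<otimes> idm N)) \<cdot> (((idm M \<otimes> c N M) \<otimes> idm N) \<otimes> idm (M \<boxtimes> N))
      = idm M \<otimes> ((idm M \<otimes> (c (N \<boxtimes> N) M \<otimes> idm N)) \<cdot> (?S \<otimes> idm (N \<boxtimes> M \<boxtimes> N)))"
    unfolding C by (simp only:) (rule ident_tensor_comp[symmetric]; (rule arr_intros | simp add: ob)+)
  have W2: "(idm M \<otimes> (c N (M \<boxtimes> M) \<otimes> idm (N \<boxtimes> N))) \<cdot> (idm (M \<boxtimes> N) \<otimes> ((idm M \<otimes> c N M) \<otimes> idm N))
     = idm M \<otimes> ((c N (M \<boxtimes> M) \<otimes> idm (N \<boxtimes> N)) \<cdot> (idm (N \<boxtimes> M) \<otimes> (?S \<otimes> idm N)))"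
    unfolding C' by (rule ident_tensor_comp[symmetric]) (rule arr_intros | simp add: ob)+
  show ?thesis using W1 W2 braid_tensor_left_whiskered[OF ob] braid_tensor_right_whiskered[OF ob] by simp
qed

lemma shuffle_comp_mult_tensor_ident:
  assumes ob: "M \<in> ob V" "N \<in> ob V" and a: "arr mu (M \<boxtimes> M) M" "arr nu (N \<boxtimes> N) N"
  shows "((idm M \<otimes> c N M) \<otimes> idm N) \<cdot> ((mu \<otimes> nu) \<otimes> idm (M \<boxtimes> N))
    = (mu \<otimes> ((idm M \<otimes> nu) \<otimes> idm N)) \<cdot> (idm (M \<boxtimes> M) \<otimes> (c (N \<boxtimes> N) M \<otimes> idm N))"
proof -
  let ?K = "(idm M \<otimes> c N M) \<otimes> idm N"
  let ?P = "(mu \<otimes> nu) \<otimes> idm (M \<boxtimes> N)"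
  let ?Y = "idm (M \<boxtimes> M) \<otimes> (c (N \<boxtimes> N) M \<otimes> idm N)"
  let ?X = "mu \<otimes> ((idm M \<otimes> nu) \<otimes> idm N)"
  have Kassoc: "?K = idm M \<otimes> (c N M \<otimes> idm N)"
    by (rule tensor_assoc) (rule arr_intros a | simp add: ob)+
  have "?P = (mu \<otimes> nu) \<otimes> (idm M \<otimes> idm N)" using tensor_ident ob by simp
  also have "\<dots> = mu \<otimes> (nu \<otimes> (idm M \<otimes> idm N))"
    by (rule tensor_assoc) (rule arr_intros a | simp add: ob)+
  also have "nu \<otimes> (idm M \<otimes> idm N) = (nu \<otimes> idm M) \<otimes> idm N"
    by (rule tensor_assoc[symmetric]) (rule arr_intros a | simp add: ob)+
  finally have "?K \<cdot> ?P = (idm M \<otimes> (c N M \<otimes> idm N)) \<cdot> (mu \<otimes> ((nu \<otimes> idm M) \<otimes> idm N))"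
    using Kassoc by simp
  also have "\<dots> = (idm M \<cdot> mu) \<otimes> ((c N M \<otimes> idm N) \<cdot> ((nu \<otimes> idm M) \<otimes> idm N))"
    by (rule interchange[symmetric]) (rule arr_intros a | simp add: ob)+
  also have "(c N M \<otimes> idm N) \<cdot> ((nu \<otimes> idm M) \<otimes> idm N) = (c N M \<cdot> (nu \<otimes> idm M)) \<otimes> (idm N \<cdot> idm N)"
    by (rule interchange[symmetric]) (rule arr_intros a | simp add: ob)+
  also have "c N M \<cdot> (nu \<otimes> idm M) = (idm M \<otimes> nu) \<cdot> c (N \<boxtimes> N) M"
    by (rule braid_natural) (rule arr_intros a | simp add: ob)+
  also have "((idm M \<otimes> nu) \<cdot> c (N \<boxtimes> N) M) \<otimes> (idm N \<cdot> idm N) = ((idm M \<otimes> nu) \<otimes> idm N) \<cdot> (c (N \<boxtimes> N) M \<otimes> idm N)"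
    by (rule interchange) (rule arr_intros a | simp add: ob)+
  also have "idm M \<cdot> mu = mu \<cdot> idm (M \<boxtimes> M)"
    using comp_ident_left[OF a(1)] comp_ident_right[OF a(1)] by simp
  also have "(mu \<cdot> idm (M \<boxtimes> M)) \<otimes> (((idm M \<otimes> nu) \<otimes> idm N) \<cdot> (c (N \<boxtimes> N) M \<otimes> idm N)) = ?X \<cdot> ?Y"
    by (rule interchange) (rule arr_intros a | simp add: ob)+
  finally show ?thesis .
qed

lemma tmult_assoc_left:
  assumes ob: "M \<in> ob V" "N \<in> ob V" and a: "arr mu (M \<boxtimes> M) M" "arr nu (N \<boxtimes> N) N"
  shows "tmult V M mu N nu \<cdot> (tmult V M mu N nu \<otimes> idm (M \<boxtimes> N)) =
    ((mu \<cdot> (mu \<otimes> idm M)) \<otimes> (nu \<cdot> (nu \<otimes> idm N))) \<cdot>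
    ((idm (M \<boxtimes> M) \<otimes> (c (N \<boxtimes> N) M \<otimes> idm N)) \<cdot> (((idm M \<otimes> c N M) \<otimes> idm N) \<otimes> idm (M \<boxtimes> N)))"
proof -
  let ?K = "(idm M \<otimes> c N M) \<otimes> idm N"
  let ?P = "(mu \<otimes> nu) \<otimes> idm (M \<boxtimes> N)"
  let ?Q = "?K \<otimes> idm (M \<boxtimes> N)"
  let ?Y = "idm (M \<boxtimes> M) \<otimes> (c (N \<boxtimes> N) M \<otimes> idm N)"
  let ?X = "mu \<otimes> ((idm M \<otimes> nu) \<otimes> idm N)"
  have tmult_tensor: "tmult V M mu N nu \<otimes> idm (M \<boxtimes> N) = ?P \<cdot> ?Q"
  proof -
    have "tmult V M mu N nu \<otimes> idm (M \<boxtimes> N) = ((mu \<otimes> nu) \<cdot> ?K) \<otimes> (idm (M \<boxtimes> N) \<cdot> idm (M \<boxtimes> N))"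
      unfolding tmult_def using comp_ident_left[OF arr_ident[of "M \<boxtimes> N"]] ob by simp
    also have "\<dots> = ?P \<cdot> ?Q" by (rule interchange) (rule arr_intros a | simp add: ob)+
    finally show ?thesis .
  qed
  have shuffle: "?K \<cdot> ?P = ?X \<cdot> ?Y" by (rule shuffle_comp_mult_tensor_ident[OF ob a])
  have mult_mult: "(mu \<otimes> nu) \<cdot> ?X = (mu \<cdot> (mu \<otimes> idm M)) \<otimes> (nu \<cdot> (nu \<otimes> idm N))"
  proof -
    have "(idm M \<otimes> nu) \<otimes> idm N = idm M \<otimes> (nu \<otimes> idm N)"
      by (rule tensor_assoc) (rule arr_intros a | simp add: ob)+
    moreover have "mu \<otimes> (idm M \<otimes> (nu \<otimes> idm N)) = (mu \<otimes> idm M) \<otimes> (nu \<otimes> idm N)"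
      by (rule tensor_assoc[symmetric]) (rule arr_intros a | simp add: ob)+
    moreover have "(mu \<otimes> nu) \<cdot> ((mu \<otimes> idm M) \<otimes> (nu \<otimes> idm N)) = (mu \<cdot> (mu \<otimes> idm M)) \<otimes> (nu \<cdot> (nu \<otimes> idm N))"
      by (rule interchange[symmetric]) (rule arr_intros a | simp add: ob)+
    ultimately show ?thesis by simp
  qed
  have "tmult V M mu N nu \<cdot> (tmult V M mu N nu \<otimes> idm (M \<boxtimes> N)) = ((mu \<otimes> nu) \<cdot> ?K) \<cdot> (?P \<cdot> ?Q)"
    using tmult_tensor unfolding tmult_def by simp
  also have "\<dots> = (mu \<otimes> nu) \<cdot> (?K \<cdot> (?P \<cdot> ?Q))"
    by (rule comp_assoc[symmetric]) (rule arr_intros a | simp add: ob)+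
  also have "?K \<cdot> (?P \<cdot> ?Q) = (?K \<cdot> ?P) \<cdot> ?Q"
    by (rule comp_assoc) (rule arr_intros a | simp add: ob)+
  also note shuffle
  also have "(mu \<otimes> nu) \<cdot> ((?X \<cdot> ?Y) \<cdot> ?Q) = (mu \<otimes> nu) \<cdot> (?X \<cdot> (?Y \<cdot> ?Q))"
    by (subst comp_assoc[symmetric]) (rule arr_intros a | simp add: ob)+
  also have "\<dots> = ((mu \<otimes> nu) \<cdot> ?X) \<cdot> (?Y \<cdot> ?Q)"
    by (rule comp_assoc) (rule arr_intros a | simp add: ob)+
  also note mult_mult
  finally show ?thesis .
qed

lemma shuffle_comp_ident_tensor_mult:
  assumes ob: "M \<in> ob V" "N \<in> ob V" and a: "arr mu (M \<boxtimes> M) M" "arr nu (N \<boxtimes> N) N"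
  shows "((idm M \<otimes> c N M) \<otimes> idm N) \<cdot> (idm (M \<boxtimes> N) \<otimes> (mu \<otimes> nu))
    = (idm M \<otimes> ((mu \<otimes> idm N) \<otimes> nu)) \<cdot> (idm M \<otimes> (c N (M \<boxtimes> M) \<otimes> idm (N \<boxtimes> N)))"
proof -
  let ?K = "(idm M \<otimes> c N M) \<otimes> idm N"
  let ?P = "idm (M \<boxtimes> N) \<otimes> (mu \<otimes> nu)"
  let ?Y = "idm M \<otimes> (c N (M \<boxtimes> M) \<otimes> idm (N \<boxtimes> N))"
  let ?X = "idm M \<otimes> ((mu \<otimes> idm N) \<otimes> nu)"
  have Kassoc: "?K = idm M \<otimes> (c N M \<otimes> idm N)"
    by (rule tensor_assoc) (rule arr_intros a | simp add: ob)+
  have "?P = (idm M \<otimes> idm N) \<otimes> (mu \<otimes> nu)" using tensor_ident ob by simp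
  also have "\<dots> = idm M \<otimes> (idm N \<otimes> (mu \<otimes> nu))"
    by (rule tensor_assoc) (rule arr_intros a | simp add: ob)+
  also have "idm N \<otimes> (mu \<otimes> nu) = (idm N \<otimes> mu) \<otimes> nu"
    by (rule tensor_assoc[symmetric]) (rule arr_intros a | simp add: ob)+
  finally have "?K \<cdot> ?P = (idm M \<otimes> (c N M \<otimes> idm N)) \<cdot> (idm M \<otimes> ((idm N \<otimes> mu) \<otimes> nu))"
    using Kassoc by simp
  also have "\<dots> = (idm M \<cdot> idm M) \<otimes> ((c N M \<otimes> idm N) \<cdot> ((idm N \<otimes> mu) \<otimes> nu))"
    by (rule interchange[symmetric]) (rule arr_intros a | simp add: ob)+
  also have "(c N M \<otimes> idm N) \<cdot> ((idm N \<otimes> mu) \<otimes> nu) = (c N M \<cdot> (idm N \<otimes> mu)) \<otimes> (idm N \<cdot> nu)"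
    by (rule interchange[symmetric]) (rule arr_intros a | simp add: ob)+
  also have "c N M \<cdot> (idm N \<otimes> mu) = (mu \<otimes> idm N) \<cdot> c N (M \<boxtimes> M)"
    by (rule braid_natural) (rule arr_intros a | simp add: ob)+
  also have "idm N \<cdot> nu = nu \<cdot> idm (N \<boxtimes> N)"
    using comp_ident_left[OF a(2)] comp_ident_right[OF a(2)] by simp
  also have "((mu \<otimes> idm N) \<cdot> c N (M \<boxtimes> M)) \<otimes> (nu \<cdot> idm (N \<boxtimes> N)) = ((mu \<otimes> idm N) \<otimes> nu) \<cdot> (c N (M \<boxtimes> M) \<otimes> idm (N \<boxtimes> N))"
    by (rule interchange) (rule arr_intros a | simp add: ob)+
  also have "(idm M \<cdot> idm M) \<otimes> (((mu \<otimes> idm N) \<otimes> nu) \<cdot> (c N (M \<boxtimes> M) \<otimes> idm (N \<boxtimes> N))) = ?X \<cdot> ?Y"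
    by (rule interchange) (rule arr_intros a | simp add: ob)+
  finally show ?thesis .
qed

lemma tmult_assoc_right:
  assumes ob: "M \<in> ob V" "N \<in> ob V" and a: "arr mu (M \<boxtimes> M) M" "arr nu (N \<boxtimes> N) N"
  shows "tmult V M mu N nu \<cdot> (idm (M \<boxtimes> N) \<otimes> tmult V M mu N nu) =
    ((mu \<cdot> (idm M \<otimes> mu)) \<otimes> (nu \<cdot> (idm N \<otimes> nu))) \<cdot>
    ((idm M \<otimes> (c N (M \<boxtimes> M) \<otimes> idm (N \<boxtimes> N))) \<cdot> (idm (M \<boxtimes> N) \<otimes> ((idm M \<otimes> c N M) \<otimes> idm N)))"
proof -
  let ?K = "(idm M \<otimes> c N M) \<otimes> idm N"
  let ?P = "idm (M \<boxtimes> N) \<otimes> (mu \<otimes> nu)"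
  let ?Q = "idm (M \<boxtimes> N) \<otimes> ?K"
  let ?Y = "idm M \<otimes> (c N (M \<boxtimes> M) \<otimes> idm (N \<boxtimes> N))"
  let ?X = "idm M \<otimes> ((mu \<otimes> idm N) \<otimes> nu)"
  have tmult_tensor: "idm (M \<boxtimes> N) \<otimes> tmult V M mu N nu = ?P \<cdot> ?Q"
  proof -
    have "idm (M \<boxtimes> N) \<otimes> tmult V M mu N nu = (idm (M \<boxtimes> N) \<cdot> idm (M \<boxtimes> N)) \<otimes> ((mu \<otimes> nu) \<cdot> ?K)"
      unfolding tmult_def using comp_ident_left[OF arr_ident[of "M \<boxtimes> N"]] ob by simp
    also have "\<dots> = ?P \<cdot> ?Q" by (rule interchange) (rule arr_intros a | simp add: ob)+
    finally show ?thesis .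
  qed
  have shuffle: "?K \<cdot> ?P = ?X \<cdot> ?Y" by (rule shuffle_comp_ident_tensor_mult[OF ob a])
  have mult_mult: "(mu \<otimes> nu) \<cdot> ?X = (mu \<cdot> (idm M \<otimes> mu)) \<otimes> (nu \<cdot> (idm N \<otimes> nu))"
  proof -
    have "(mu \<otimes> idm N) \<otimes> nu = mu \<otimes> (idm N \<otimes> nu)"
      by (rule tensor_assoc) (rule arr_intros a | simp add: ob)+
    moreover have "idm M \<otimes> (mu \<otimes> (idm N \<otimes> nu)) = (idm M \<otimes> mu) \<otimes> (idm N \<otimes> nu)"
      by (rule tensor_assoc[symmetric]) (rule arr_intros a | simp add: ob)+
    moreover have "(mu \<otimes> nu) \<cdot> ((idm M \<otimes> mu) \<otimes> (idm N \<otimes> nu)) = (mu \<cdot> (idm M \<otimes> mu)) \<otimes> (nu \<cdot> (idm N \<otimes> nu))"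
      by (rule interchange[symmetric]) (rule arr_intros a | simp add: ob)+
    ultimately show ?thesis by simp
  qed
  have "tmult V M mu N nu \<cdot> (idm (M \<boxtimes> N) \<otimes> tmult V M mu N nu) = ((mu \<otimes> nu) \<cdot> ?K) \<cdot> (?P \<cdot> ?Q)"
    using tmult_tensor unfolding tmult_def by simp
  also have "\<dots> = (mu \<otimes> nu) \<cdot> (?K \<cdot> (?P \<cdot> ?Q))"
    by (rule comp_assoc[symmetric]) (rule arr_intros a | simp add: ob)+
  also have "?K \<cdot> (?P \<cdot> ?Q) = (?K \<cdot> ?P) \<cdot> ?Q"
    by (rule comp_assoc) (rule arr_intros a | simp add: ob)+
  also note shuffle
  also have "(mu \<otimes> nu) \<cdot> ((?X \<cdot> ?Y) \<cdot> ?Q) = (mu \<otimes> nu) \<cdot> (?X \<cdot> (?Y \<cdot> ?Q))"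
    by (subst comp_assoc[symmetric]) (rule arr_intros a | simp add: ob)+
  also have "\<dots> = ((mu \<otimes> nu) \<cdot> ?X) \<cdot> (?Y \<cdot> ?Q)"
    by (rule comp_assoc) (rule arr_intros a | simp add: ob)+
  also note mult_mult
  finally show ?thesis .
qed

lemma tensor_monoid:
  assumes M: "is_monoid V M mu eta" and N: "is_monoid V N nu th"
  shows "is_monoid V (M \<boxtimes> N) (tmult V M mu N nu) (eta \<otimes> th)"
proof -
  note m = monoidD[OF M] and n = monoidD[OF N]
  note ob = m(1) n(1)
  have a: "arr (tmult V M mu N nu) ((M \<boxtimes> N) \<boxtimes> (M \<boxtimes> N)) (M \<boxtimes> N)" by (rule arr_tmult[OF m(2) n(2)])
  have e: "arr (eta \<otimes> th) I (M \<boxtimes> N)" by (rule arr_intros a m n | simp add: ob)+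
  have as: "tmult V M mu N nu \<cdot> (tmult V M mu N nu \<otimes> idm (M \<boxtimes> N))
      = tmult V M mu N nu \<cdot> (idm (M \<boxtimes> N) \<otimes> tmult V M mu N nu)"
    using tmult_assoc_left[OF ob m(2) n(2)] tmult_assoc_right[OF ob m(2) n(2)] tmult_assoc_braids[OF ob]
      m(4) n(4) by simp
  have "tmult V M mu N nu \<cdot> ((eta \<otimes> th) \<otimes> idm (M \<boxtimes> N)) = dotp V (tmult V M mu N nu) (eta \<otimes> th) (idm M \<otimes> idm N)"
    unfolding dotp_def using tensor_ident ob by simp
  also have "\<dots> = dotp V mu eta (idm M) \<otimes> dotp V nu th (idm N)"
    by (rule tmult_dotp_tensor[OF M N m(3) n(3) arr_ident[OF m(1)] arr_ident[OF n(1)]]) (simp add: ob braid_unit_left)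
  also have "\<dots> = idm (M \<boxtimes> N)" using dotp_unit_left[OF M arr_ident] dotp_unit_left[OF N arr_ident] tensor_ident ob by simp
  finally have ul: "tmult V M mu N nu \<cdot> ((eta \<otimes> th) \<otimes> idm (M \<boxtimes> N)) = idm (M \<boxtimes> N)" .
  have "tmult V M mu N nu \<cdot> (idm (M \<boxtimes> N) \<otimes> (eta \<otimes> th)) = dotp V (tmult V M mu N nu) (idm M \<otimes> idm N) (eta \<otimes> th)"
    unfolding dotp_def using tensor_ident ob by simp
  also have "\<dots> = dotp V mu (idm M) eta \<otimes> dotp V nu (idm N) th"
    by (rule tmult_dotp_tensor[OF M N arr_ident[OF m(1)] arr_ident[OF n(1)] m(3) n(3)]) (simp add: ob braid_unit_right)
  also have "\<dots> = idm (M \<boxtimes> N)" using dotp_unit_right[OF M arr_ident] dotp_unit_right[OF N arr_ident] tensor_ident ob by simp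
  finally have ur: "tmult V M mu N nu \<cdot> (idm (M \<boxtimes> N) \<otimes> (eta \<otimes> th)) = idm (M \<boxtimes> N)" .
  show ?thesis unfolding is_monoid_def using a e as ul ur ob unfolding arr_def by simp
qed

lemma tmult_tensor_left_braids:
  assumes ob: "M \<in> ob V" "N \<in> ob V" "P \<in> ob V"
  shows "(((idm M \<otimes> c N M) \<otimes> idm N) \<otimes> idm (P \<boxtimes> P)) \<cdot> ((idm (M \<boxtimes> N) \<otimes> c P (M \<boxtimes> N)) \<otimes> idm P)
    = idm M \<otimes> ((c N M \<otimes> (c P N \<otimes> idm P)) \<cdot> (idm N \<otimes> ((c P M \<otimes> idm N) \<otimes> idm P)))"
proof -
  have "((idm M \<otimes> c N M) \<otimes> idm N) \<otimes> idm (P \<boxtimes> P) = (idm M \<otimes> c N M) \<otimes> (idm N \<otimes> idm (P \<boxtimes> P))"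
    by (rule tensor_assoc) (rule arr_intros | simp add: ob)+
  also have "\<dots> = idm M \<otimes> (c N M \<otimes> (idm N \<otimes> idm (P \<boxtimes> P)))"
    by (rule tensor_assoc) (rule arr_intros | simp add: ob)+
  finally have k1: "((idm M \<otimes> c N M) \<otimes> idm N) \<otimes> idm (P \<boxtimes> P) = idm M \<otimes> (c N M \<otimes> idm (N \<boxtimes> P \<boxtimes> P))"
    using tensor_ident ob by simp
  have "(idm (M \<boxtimes> N) \<otimes> c P (M \<boxtimes> N)) \<otimes> idm P = (idm M \<otimes> idm N) \<otimes> (c P (M \<boxtimes> N) \<otimes> idm P)"
    unfolding tensor_ident[OF ob(1,2), symmetric] by (rule tensor_assoc) (rule arr_intros | simp add: ob)+
  also have "\<dots> = idm M \<otimes> (idm N \<otimes> (c P (M \<boxtimes> N) \<otimes> idm P))"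
    by (rule tensor_assoc) (rule arr_intros | simp add: ob)+
  finally have k2: "(idm (M \<boxtimes> N) \<otimes> c P (M \<boxtimes> N)) \<otimes> idm P = idm M \<otimes> (idm N \<otimes> (c P (M \<boxtimes> N) \<otimes> idm P))" .
  have "idm N \<otimes> ((idm M \<otimes> c P N) \<otimes> idm P) = idm N \<otimes> (idm M \<otimes> (c P N \<otimes> idm P))"
    by (subst tensor_assoc) (rule arr_intros | simp add: ob)+
  also have "\<dots> = idm (N \<boxtimes> M) \<otimes> (c P N \<otimes> idm P)"
    unfolding tensor_ident[OF ob(2,1), symmetric] by (rule tensor_assoc[symmetric]) (rule arr_intros | simp add: ob)+
  finally have k3: "idm N \<otimes> ((idm M \<otimes> c P N) \<otimes> idm P) = idm (N \<boxtimes> M) \<otimes> (c P N \<otimes> idm P)" .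
  have split: "c P (M \<boxtimes> N) \<otimes> idm P = ((idm M \<otimes> c P N) \<otimes> idm P) \<cdot> ((c P M \<otimes> idm N) \<otimes> idm P)"
    unfolding braid_tensor_right[OF ob(3,1,2)] by (rule comp_tensor_ident) (rule arr_intros | simp add: ob)+
  have "idm N \<otimes> (((idm M \<otimes> c P N) \<otimes> idm P) \<cdot> ((c P M \<otimes> idm N) \<otimes> idm P))
      = (idm N \<otimes> ((idm M \<otimes> c P N) \<otimes> idm P)) \<cdot> (idm N \<otimes> ((c P M \<otimes> idm N) \<otimes> idm P))"
    by (rule ident_tensor_comp) (rule arr_intros | simp add: ob)+
  then have cp: "idm N \<otimes> (c P (M \<boxtimes> N) \<otimes> idm P)
      = (idm (N \<boxtimes> M) \<otimes> (c P N \<otimes> idm P)) \<cdot> (idm N \<otimes> ((c P M \<otimes> idm N) \<otimes> idm P))"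
    by (simp only: split k3)
  have assoc: "(c N M \<otimes> idm (N \<boxtimes> P \<boxtimes> P)) \<cdot> ((idm (N \<boxtimes> M) \<otimes> (c P N \<otimes> idm P)) \<cdot> (idm N \<otimes> ((c P M \<otimes> idm N) \<otimes> idm P)))
      = ((c N M \<otimes> idm (N \<boxtimes> P \<boxtimes> P)) \<cdot> (idm (N \<boxtimes> M) \<otimes> (c P N \<otimes> idm P))) \<cdot> (idm N \<otimes> ((c P M \<otimes> idm N) \<otimes> idm P))"
    by (rule comp_assoc) (rule arr_intros | simp add: ob)+
  have whisk: "(c N M \<otimes> idm (N \<boxtimes> P \<boxtimes> P)) \<cdot> (idm (N \<boxtimes> M) \<otimes> (c P N \<otimes> idm P)) = c N M \<otimes> (c P N \<otimes> idm P)"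
    by (rule tensor_ident_comp_ident_tensor) (rule arr_intros | simp add: ob)+
  have "(idm M \<otimes> (c N M \<otimes> idm (N \<boxtimes> P \<boxtimes> P))) \<cdot> (idm M \<otimes> (idm N \<otimes> (c P (M \<boxtimes> N) \<otimes> idm P)))
      = idm M \<otimes> ((c N M \<otimes> idm (N \<boxtimes> P \<boxtimes> P)) \<cdot> (idm N \<otimes> (c P (M \<boxtimes> N) \<otimes> idm P)))"
    by (rule ident_tensor_comp[symmetric]) (rule arr_intros | simp add: ob)+
  then show ?thesis unfolding k1 k2 by (simp only: cp assoc whisk)
qed

lemma tmult_tensor_right_braids:
  assumes ob: "M \<in> ob V" "N \<in> ob V" "P \<in> ob V"
  shows "(idm (M \<boxtimes> M) \<otimes> ((idm N \<otimes> c P N) \<otimes> idm P)) \<cdot> ((idm M \<otimes> c (N \<boxtimes> P) M) \<otimes> idm (N \<boxtimes> P))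
    = idm M \<otimes> ((c N M \<otimes> (c P N \<otimes> idm P)) \<cdot> ((idm N \<otimes> c P M) \<otimes> idm (N \<boxtimes> P)))"
proof -
  have "(idm N \<otimes> c P N) \<otimes> idm P = idm N \<otimes> (c P N \<otimes> idm P)"
    by (rule tensor_assoc) (rule arr_intros | simp add: ob)+
  moreover have "idm M \<otimes> (idm N \<otimes> (c P N \<otimes> idm P)) = idm (M \<boxtimes> N) \<otimes> (c P N \<otimes> idm P)"
    unfolding tensor_ident[OF ob(1,2), symmetric] by (rule tensor_assoc[symmetric]) (rule arr_intros | simp add: ob)+
  moreover have "idm (M \<boxtimes> M) \<otimes> ((idm N \<otimes> c P N) \<otimes> idm P) = idm M \<otimes> (idm M \<otimes> ((idm N \<otimes> c P N) \<otimes> idm P))"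
    unfolding tensor_ident[OF ob(1,1), symmetric] by (rule tensor_assoc) (rule arr_intros | simp add: ob)+
  ultimately have k1: "idm (M \<boxtimes> M) \<otimes> ((idm N \<otimes> c P N) \<otimes> idm P) = idm M \<otimes> (idm (M \<boxtimes> N) \<otimes> (c P N \<otimes> idm P))"
    by simp
  have k2: "(idm M \<otimes> c (N \<boxtimes> P) M) \<otimes> idm (N \<boxtimes> P) = idm M \<otimes> (c (N \<boxtimes> P) M \<otimes> idm (N \<boxtimes> P))"
    by (rule tensor_assoc) (rule arr_intros | simp add: ob)+
  have "(c N M \<otimes> idm P) \<otimes> idm (N \<boxtimes> P) = c N M \<otimes> (idm P \<otimes> idm (N \<boxtimes> P))"
    by (rule tensor_assoc) (rule arr_intros | simp add: ob)+
  then have k3: "(c N M \<otimes> idm P) \<otimes> idm (N \<boxtimes> P) = c N M \<otimes> idm (P \<boxtimes> N \<boxtimes> P)"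
    using tensor_ident ob by simp
  have split: "c (N \<boxtimes> P) M \<otimes> idm (N \<boxtimes> P) = (c N M \<otimes> idm (P \<boxtimes> N \<boxtimes> P)) \<cdot> ((idm N \<otimes> c P M) \<otimes> idm (N \<boxtimes> P))"
    unfolding braid_tensor_left[OF ob(2,3,1)] k3[symmetric]
    by (rule comp_tensor_ident) (rule arr_intros | simp add: ob)+
  have assoc: "(idm (M \<boxtimes> N) \<otimes> (c P N \<otimes> idm P)) \<cdot> ((c N M \<otimes> idm (P \<boxtimes> N \<boxtimes> P)) \<cdot> ((idm N \<otimes> c P M) \<otimes> idm (N \<boxtimes> P)))
      = ((idm (M \<boxtimes> N) \<otimes> (c P N \<otimes> idm P)) \<cdot> (c N M \<otimes> idm (P \<boxtimes> N \<boxtimes> P))) \<cdot> ((idm N \<otimes> c P M) \<otimes> idm (N \<boxtimes> P))"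
    by (rule comp_assoc) (rule arr_intros | simp add: ob)+
  have whisk: "(idm (M \<boxtimes> N) \<otimes> (c P N \<otimes> idm P)) \<cdot> (c N M \<otimes> idm (P \<boxtimes> N \<boxtimes> P)) = c N M \<otimes> (c P N \<otimes> idm P)"
    by (rule ident_tensor_comp_tensor_ident) (rule arr_intros | simp add: ob)+
  have "(idm M \<otimes> (idm (M \<boxtimes> N) \<otimes> (c P N \<otimes> idm P))) \<cdot> (idm M \<otimes> (c (N \<boxtimes> P) M \<otimes> idm (N \<boxtimes> P)))
      = idm M \<otimes> ((idm (M \<boxtimes> N) \<otimes> (c P N \<otimes> idm P)) \<cdot> (c (N \<boxtimes> P) M \<otimes> idm (N \<boxtimes> P)))"
    by (rule ident_tensor_comp[symmetric]) (rule arr_intros | simp add: ob)+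
  then show ?thesis unfolding k1 k2 by (simp only: split assoc whisk)
qed

lemma tmult_tensor_assoc:
  assumes ob: "M \<in> ob V" "N \<in> ob V" "P \<in> ob V" and a: "arr mu (M \<boxtimes> M) M" "arr nu (N \<boxtimes> N) N" "arr rho (P \<boxtimes> P) P"
  shows "tmult V (M \<boxtimes> N) (tmult V M mu N nu) P rho = tmult V M mu (N \<boxtimes> P) (tmult V N nu P rho)"
proof -
  let ?K1 = "(idm M \<otimes> c N M) \<otimes> idm N"
  let ?K2 = "(idm N \<otimes> c P N) \<otimes> idm P"
  let ?WL = "(?K1 \<otimes> idm (P \<boxtimes> P)) \<cdot> ((idm (M \<boxtimes> N) \<otimes> c P (M \<boxtimes> N)) \<otimes> idm P)"
  let ?WR = "(idm (M \<boxtimes> M) \<otimes> ?K2) \<cdot> ((idm M \<otimes> c (N \<boxtimes> P) M) \<otimes> idm (N \<boxtimes> P))"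
  have L: "tmult V (M \<boxtimes> N) (tmult V M mu N nu) P rho = ((mu \<otimes> nu) \<otimes> rho) \<cdot> ?WL"
  proof -
    have "tmult V M mu N nu \<otimes> rho = ((mu \<otimes> nu) \<cdot> ?K1) \<otimes> (rho \<cdot> idm (P \<boxtimes> P))"
      unfolding tmult_def using comp_ident_right[OF a(3)] by simp
    also have "\<dots> = ((mu \<otimes> nu) \<otimes> rho) \<cdot> (?K1 \<otimes> idm (P \<boxtimes> P))"
      by (rule interchange) (rule arr_intros a | simp add: ob)+
    finally have "tmult V (M \<boxtimes> N) (tmult V M mu N nu) P rho = (((mu \<otimes> nu) \<otimes> rho) \<cdot> (?K1 \<otimes> idm (P \<boxtimes> P))) \<cdot> ((idm (M \<boxtimes> N) \<otimes> c P (M \<boxtimes> N)) \<otimes> idm P)"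
      unfolding tmult_def[of V "M \<boxtimes> N"] by simp
    also have "\<dots> = ((mu \<otimes> nu) \<otimes> rho) \<cdot> ?WL"
      by (rule comp_assoc[symmetric]) (rule arr_intros a | simp add: ob)+
    finally show ?thesis .
  qed
  have R: "tmult V M mu (N \<boxtimes> P) (tmult V N nu P rho) = (mu \<otimes> (nu \<otimes> rho)) \<cdot> ?WR"
  proof -
    have "mu \<otimes> tmult V N nu P rho = (mu \<cdot> idm (M \<boxtimes> M)) \<otimes> ((nu \<otimes> rho) \<cdot> ?K2)"
      unfolding tmult_def using comp_ident_right[OF a(1)] by simp
    also have "\<dots> = (mu \<otimes> (nu \<otimes> rho)) \<cdot> (idm (M \<boxtimes> M) \<otimes> ?K2)"
      by (rule interchange) (rule arr_intros a | simp add: ob)+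
    finally have "tmult V M mu (N \<boxtimes> P) (tmult V N nu P rho) = ((mu \<otimes> (nu \<otimes> rho)) \<cdot> (idm (M \<boxtimes> M) \<otimes> ?K2)) \<cdot> ((idm M \<otimes> c (N \<boxtimes> P) M) \<otimes> idm (N \<boxtimes> P))"
      unfolding tmult_def[of V M mu "N \<boxtimes> P"] by simp
    also have "\<dots> = (mu \<otimes> (nu \<otimes> rho)) \<cdot> ?WR"
      by (rule comp_assoc[symmetric]) (rule arr_intros a | simp add: ob)+
    finally show ?thesis .
  qed
  have mnr: "(mu \<otimes> nu) \<otimes> rho = mu \<otimes> (nu \<otimes> rho)"
    by (rule tensor_assoc) (rule arr_intros a | simp add: ob)+
  have WL: "?WL = idm M \<otimes> ((c N M \<otimes> (c P N \<otimes> idm P)) \<cdot> (idm N \<otimes> ((c P M \<otimes> idm N) \<otimes> idm P)))"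
    by (rule tmult_tensor_left_braids[OF ob])
  have WR: "?WR = idm M \<otimes> ((c N M \<otimes> (c P N \<otimes> idm P)) \<cdot> ((idm N \<otimes> c P M) \<otimes> idm (N \<boxtimes> P)))"
    by (rule tmult_tensor_right_braids[OF ob])
  have last: "idm N \<otimes> ((c P M \<otimes> idm N) \<otimes> idm P) = (idm N \<otimes> c P M) \<otimes> idm (N \<boxtimes> P)"
  proof -
    have "(c P M \<otimes> idm N) \<otimes> idm P = c P M \<otimes> (idm N \<otimes> idm P)"
      by (rule tensor_assoc) (rule arr_intros a | simp add: ob)+
    moreover have "(idm N \<otimes> c P M) \<otimes> (idm N \<otimes> idm P) = idm N \<otimes> (c P M \<otimes> (idm N \<otimes> idm P))"
      by (rule tensor_assoc) (rule arr_intros a | simp add: ob)+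
    ultimately show ?thesis using tensor_ident ob by simp
  qed
  show ?thesis using L R mnr WL WR last by simp
qed

lemma tmult_unit:
  assumes "arr mu (M \<boxtimes> M) M"
  shows "tmult V M mu I (idm I) = mu"
proof -
  have ob: "M \<in> ob V" using assms arrD by auto
  have "tmult V M mu I (idm I) = (mu \<otimes> idm I) \<cdot> ((idm M \<otimes> c I M) \<otimes> idm I)" unfolding tmult_def ..
  also have "\<dots> = mu \<cdot> (idm M \<otimes> idm M)" using braid_unit_left ob tensor_unit[OF assms] tensor_unit[OF arr_tensor[OF arr_ident arr_ident]] by simp
  also have "\<dots> = mu" using tensor_ident ob comp_ident_right[OF assms] by simp
  finally show ?thesis .
qed

lemma shuffle_natural:
  assumes fa: "arr f M M'" and ga: "arr g N N'"
  shows "((f \<otimes> f) \<otimes> (g \<otimes> g)) \<cdot> ((idm M \<otimes> c N M) \<otimes> idm N)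
    = ((idm M' \<otimes> c N' M') \<otimes> idm N') \<cdot> ((f \<otimes> g) \<otimes> (f \<otimes> g))"
proof -
  have ob: "M \<in> ob V" "N \<in> ob V" "M' \<in> ob V" "N' \<in> ob V" using arrD fa ga by blast+
  let ?K = "(idm M \<otimes> c N M) \<otimes> idm N"
  let ?K' = "(idm M' \<otimes> c N' M') \<otimes> idm N'"
  let ?F = "(f \<otimes> g) \<otimes> (f \<otimes> g)"
  have e1: "(f \<otimes> f) \<otimes> (g \<otimes> g) = f \<otimes> ((f \<otimes> g) \<otimes> g)"
  proof -
    have "(f \<otimes> f) \<otimes> (g \<otimes> g) = f \<otimes> (f \<otimes> (g \<otimes> g))"
      by (rule tensor_assoc) (rule arr_intros fa ga | simp add: ob)+
    also have "f \<otimes> (g \<otimes> g) = (f \<otimes> g) \<otimes> g"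
      by (rule tensor_assoc[symmetric]) (rule arr_intros fa ga | simp add: ob)+
    finally show ?thesis .
  qed
  have e2: "?K = idm M \<otimes> (c N M \<otimes> idm N)"
    by (rule tensor_assoc) (rule arr_intros fa ga | simp add: ob)+
  have e3: "?K' = idm M' \<otimes> (c N' M' \<otimes> idm N')"
    by (rule tensor_assoc) (rule arr_intros fa ga | simp add: ob)+
  have e4: "f \<otimes> ((g \<otimes> f) \<otimes> g) = ?F"
  proof -
    have "(g \<otimes> f) \<otimes> g = g \<otimes> (f \<otimes> g)" by (rule tensor_assoc) (rule arr_intros fa ga | simp add: ob)+
    moreover have "f \<otimes> (g \<otimes> (f \<otimes> g)) = ?F"
      by (rule tensor_assoc[symmetric]) (rule arr_intros fa ga | simp add: ob)+
    ultimately show ?thesis by simp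
  qed
  have "((f \<otimes> f) \<otimes> (g \<otimes> g)) \<cdot> ?K = (f \<otimes> ((f \<otimes> g) \<otimes> g)) \<cdot> (idm M \<otimes> (c N M \<otimes> idm N))"
    using e1 e2 by simp
  also have "\<dots> = (f \<cdot> idm M) \<otimes> (((f \<otimes> g) \<otimes> g) \<cdot> (c N M \<otimes> idm N))"
    by (rule interchange[symmetric]) (rule arr_intros fa ga | simp add: ob)+
  also have "((f \<otimes> g) \<otimes> g) \<cdot> (c N M \<otimes> idm N) = ((f \<otimes> g) \<cdot> c N M) \<otimes> (g \<cdot> idm N)"
    by (rule interchange[symmetric]) (rule arr_intros fa ga | simp add: ob)+
  also have "(f \<otimes> g) \<cdot> c N M = c N' M' \<cdot> (g \<otimes> f)"
    by (rule braid_natural[symmetric]) (rule arr_intros fa ga | simp add: ob)+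
  also have "g \<cdot> idm N = idm N' \<cdot> g" using comp_ident_left[OF ga] comp_ident_right[OF ga] by simp
  also have "f \<cdot> idm M = idm M' \<cdot> f" using comp_ident_left[OF fa] comp_ident_right[OF fa] by simp
  also have "(c N' M' \<cdot> (g \<otimes> f)) \<otimes> (idm N' \<cdot> g) = (c N' M' \<otimes> idm N') \<cdot> ((g \<otimes> f) \<otimes> g)"
    by (rule interchange) (rule arr_intros fa ga | simp add: ob)+
  also have "(idm M' \<cdot> f) \<otimes> ((c N' M' \<otimes> idm N') \<cdot> ((g \<otimes> f) \<otimes> g)) = (idm M' \<otimes> (c N' M' \<otimes> idm N')) \<cdot> (f \<otimes> ((g \<otimes> f) \<otimes> g))"
    by (rule interchange) (rule arr_intros fa ga | simp add: ob)+
  finally show ?thesis using e3 e4 by simp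
qed

lemma tensor_monoid_hom:
  assumes f: "monoid_hom V M mu eta M' mu' eta' f" and g: "monoid_hom V N nu th N' nu' th' g"
    and ob: "M \<in> ob V" "N \<in> ob V" "M' \<in> ob V" "N' \<in> ob V"
    and a: "arr mu (M \<boxtimes> M) M" "arr nu (N \<boxtimes> N) N" "arr mu' (M' \<boxtimes> M') M'" "arr nu' (N' \<boxtimes> N') N'"
       "arr eta I M" "arr th I N"
  shows "monoid_hom V (M \<boxtimes> N) (tmult V M mu N nu) (eta \<otimes> th) (M' \<boxtimes> N') (tmult V M' mu' N' nu') (eta' \<otimes> th') (f \<otimes> g)"
proof -
  have fa: "arr f M M'" by (rule monoid_homD(1)[OF f ob(1,3)])
  have ga: "arr g N N'" by (rule monoid_homD(1)[OF g ob(2,4)])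
  let ?K = "(idm M \<otimes> c N M) \<otimes> idm N"
  let ?K' = "(idm M' \<otimes> c N' M') \<otimes> idm N'"
  let ?F = "(f \<otimes> g) \<otimes> (f \<otimes> g)"
  have shuffle: "((f \<otimes> f) \<otimes> (g \<otimes> g)) \<cdot> ?K = ?K' \<cdot> ?F" by (rule shuffle_natural[OF fa ga])
  have "(f \<otimes> g) \<cdot> tmult V M mu N nu = ((f \<otimes> g) \<cdot> (mu \<otimes> nu)) \<cdot> ?K" unfolding tmult_def
    by (rule comp_assoc) (rule arr_intros a fa ga | simp add: ob)+
  also have "(f \<otimes> g) \<cdot> (mu \<otimes> nu) = (f \<cdot> mu) \<otimes> (g \<cdot> nu)"
    by (rule interchange[symmetric]) (rule arr_intros a fa ga | simp add: ob)+
  also have "f \<cdot> mu = mu' \<cdot> (f \<otimes> f)" by (rule monoid_homD(2)[OF f])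
  also have "g \<cdot> nu = nu' \<cdot> (g \<otimes> g)" by (rule monoid_homD(2)[OF g])
  also have "(mu' \<cdot> (f \<otimes> f)) \<otimes> (nu' \<cdot> (g \<otimes> g)) = (mu' \<otimes> nu') \<cdot> ((f \<otimes> f) \<otimes> (g \<otimes> g))"
    by (rule interchange) (rule arr_intros a fa ga | simp add: ob)+
  also have "((mu' \<otimes> nu') \<cdot> ((f \<otimes> f) \<otimes> (g \<otimes> g))) \<cdot> ?K = (mu' \<otimes> nu') \<cdot> (((f \<otimes> f) \<otimes> (g \<otimes> g)) \<cdot> ?K)"
    by (rule comp_assoc[symmetric]) (rule arr_intros a fa ga | simp add: ob)+
  also note shuffle
  also have "(mu' \<otimes> nu') \<cdot> (?K' \<cdot> ?F) = tmult V M' mu' N' nu' \<cdot> ?F"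
    unfolding tmult_def by (rule comp_assoc) (rule arr_intros a fa ga | simp add: ob)+
  finally have m: "(f \<otimes> g) \<cdot> tmult V M mu N nu = tmult V M' mu' N' nu' \<cdot> ((f \<otimes> g) \<otimes> (f \<otimes> g))" .
  have "(f \<otimes> g) \<cdot> (eta \<otimes> th) = (f \<cdot> eta) \<otimes> (g \<cdot> th)"
    by (rule interchange[symmetric]) (rule arr_intros a fa ga | simp add: ob)+
  hence u: "(f \<otimes> g) \<cdot> (eta \<otimes> th) = eta' \<otimes> th'"
    using monoid_homD(3)[OF f] monoid_homD(3)[OF g] by simp
  have "arr (f \<otimes> g) (M \<boxtimes> N) (M' \<boxtimes> N')" by (rule arr_intros a fa ga | simp add: ob)+
  thus ?thesis unfolding monoid_hom_def using m u arr_def by auto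
qed

lemma mult_tensor_ident_eq_dotp:
  assumes M: "is_monoid V M mu eta" and N: "is_monoid V N nu th" and u: "arr u Y (M \<boxtimes> N)"
  shows "(mu \<otimes> idm N) \<cdot> (idm M \<otimes> u) = dotp V (tmult V M mu N nu) (idm M \<otimes> th) u"
proof -
  note m = monoidD[OF M] and n = monoidD[OF N]
  note ob = m(1) n(1) arrD(1)[OF u]
  have ta: "arr (tmult V M mu N nu) (M \<boxtimes> N \<boxtimes> M \<boxtimes> N) (M \<boxtimes> N)"
    using arr_tmult[OF m(2) n(2)] ob by simp
  have "dotp V (tmult V M mu N nu) (idm M \<otimes> th) u = tmult V M mu N nu \<cdot> (((idm M \<otimes> th) \<cdot> idm M) \<otimes> (idm (M \<boxtimes> N) \<cdot> u))"
    unfolding dotp_def using comp_ident_left[OF u] comp_ident_right[of "idm M \<otimes> th" M] arr_tensor[OF arr_ident[OF ob(1)] n(3)] ob by simp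
  also have "((idm M \<otimes> th) \<cdot> idm M) \<otimes> (idm (M \<boxtimes> N) \<cdot> u) = ((idm M \<otimes> th) \<otimes> idm (M \<boxtimes> N)) \<cdot> (idm M \<otimes> u)"
    by (rule interchange) (rule arr_intros u m n | simp add: ob)+
  also have "tmult V M mu N nu \<cdot> (((idm M \<otimes> th) \<otimes> idm (M \<boxtimes> N)) \<cdot> (idm M \<otimes> u)) = (tmult V M mu N nu \<cdot> ((idm M \<otimes> th) \<otimes> idm (M \<boxtimes> N))) \<cdot> (idm M \<otimes> u)"
    by (rule comp_assoc) (rule arr_intros u m n ta | simp add: ob)+
  also have "tmult V M mu N nu \<cdot> ((idm M \<otimes> th) \<otimes> idm (M \<boxtimes> N)) = dotp V (tmult V M mu N nu) (idm M \<otimes> th) (idm M \<otimes> idm N)"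
    unfolding dotp_def using tensor_ident ob by simp
  also have "\<dots> = dotp V mu (idm M) (idm M) \<otimes> dotp V nu th (idm N)"
    by (rule tmult_dotp_tensor[OF M N arr_ident[OF m(1)] n(3) arr_ident[OF m(1)] arr_ident[OF n(1)]]) (simp add: ob braid_unit_left)
  also have "dotp V mu (idm M) (idm M) = mu"
    unfolding dotp_def using tensor_ident ob comp_ident_right[OF m(2)] by simp
  also have "dotp V nu th (idm N) = idm N" by (rule dotp_unit_left[OF N arr_ident[OF n(1)]])
  finally show ?thesis ..
qed

end

section \<open>The mixed opwreath of a twisted coaction\<close>

locale twisted_coaction_data = braided_monoidal +
  fixes A B and muA etaA muB etaB dl ep gam tau
  assumes monoid_A: "is_monoid V A muA etaA" and bimonoid_B: "is_bimonoid V B muB etaB dl ep"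
    and coaction: "twisted_coaction V A muA etaA B muB etaB dl ep gam tau"
begin

text \<open>Multiplications of the tensor monoids; \<open>m3\<close> and \<open>m3'\<close> (and \<open>m4\<close>, \<open>m4'\<close>) are the two
bracketings, which coincide by \<open>tmult_tensor_assoc\<close>.\<close>
abbreviation "mAB \<equiv> tmult V A muA B muB"
abbreviation "mBB \<equiv> tmult V B muB B muB"
abbreviation "m3 \<equiv> tmult V (A \<boxtimes> B) mAB B muB"
abbreviation "m3' \<equiv> tmult V A muA (B \<boxtimes> B) mBB"
abbreviation "m4 \<equiv> tmult V (A \<boxtimes> B \<boxtimes> B) m3 B muB"
abbreviation "m4' \<equiv> tmult V (A \<boxtimes> B) mAB (B \<boxtimes> B) mBB"

lemma monoid_B: "is_monoid V B muB etaB" using bimonoid_B unfolding is_bimonoid_def by auto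
lemma obA[simp]: "A \<in> ob V" using monoidD(1)[OF monoid_A] .
lemma obB[simp]: "B \<in> ob V" using monoidD(1)[OF monoid_B] .
lemmas arr_muA = monoidD(2)[OF monoid_A] and arr_etaA = monoidD(3)[OF monoid_A]
  and muA_unit_right = monoidD(6)[OF monoid_A]
lemmas arr_muB = monoidD(2)[OF monoid_B] and arr_etaB = monoidD(3)[OF monoid_B]

lemma comonoid_B: "is_comonoid V B dl ep" using bimonoid_B unfolding is_bimonoid_def by auto
lemma monoid_hom_dl:
  "monoid_hom V B muB etaB (B \<boxtimes> B) mBB (etaB \<otimes> etaB) dl"
    using bimonoid_B unfolding is_bimonoid_def by auto
lemma monoid_hom_ep:
  "monoid_hom V B muB etaB I (idm I) (idm I) ep" using bimonoid_B unfolding is_bimonoid_def by auto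
lemma dl_arr: "arr dl B (B \<boxtimes> B)" using comonoid_B unfolding is_comonoid_def arr_def by auto
lemma ep_arr: "arr ep B I" using comonoid_B unfolding is_comonoid_def arr_def by auto
lemma dl_coassoc: "(dl \<otimes> idm B) \<cdot> dl = (idm B \<otimes> dl) \<cdot> dl"
  using comonoid_B unfolding is_comonoid_def by auto
lemma dl_counit_left: "(ep \<otimes> idm B) \<cdot> dl = idm B" using comonoid_B unfolding is_comonoid_def by auto
lemma dl_counit_right: "(idm B \<otimes> ep) \<cdot> dl = idm B"
  using comonoid_B unfolding is_comonoid_def by auto

lemma gam_hom: "monoid_hom V A muA etaA (A \<boxtimes> B) mAB (etaA \<otimes> etaB) gam"
  using coaction unfolding twisted_coaction_def Let_def by auto
lemma gam_arr: "arr gam A (A \<boxtimes> B)" using monoid_homD(1)[OF gam_hom] by simp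
lemma tau_arr: "arr tau I (A \<boxtimes> B \<boxtimes> B)" using coaction unfolding twisted_coaction_def Let_def arr_def by simp
lemma gam_counit: "(idm A \<otimes> ep) \<cdot> gam = idm A"
  using coaction unfolding twisted_coaction_def Let_def by simp
lemma tau_coassoc: "dotp V m3 tau ((gam \<otimes> idm B) \<cdot> gam) = dotp V m3 ((idm A \<otimes> dl) \<cdot> gam) tau"
  using coaction unfolding twisted_coaction_def Let_def by simp
lemma tau_cocycle: "dotp V m4 (((idm A \<otimes> dl) \<otimes> idm B) \<cdot> tau) (tau \<otimes> etaB) =
    dotp V m4 ((idm (A \<boxtimes> B) \<otimes> dl) \<cdot> tau) ((gam \<otimes> idm (B \<boxtimes> B)) \<cdot> tau)"
  using coaction unfolding twisted_coaction_def Let_def by simp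
lemma tau_normal_right: "(idm (A \<boxtimes> B) \<otimes> ep) \<cdot> tau = etaA \<otimes> etaB"
  using coaction unfolding twisted_coaction_def Let_def by simp
lemma tau_normal_middle: "((idm A \<otimes> ep) \<otimes> idm B) \<cdot> tau = etaA \<otimes> etaB"
  using coaction unfolding twisted_coaction_def Let_def by simp

lemma monoid_AB: "is_monoid V (A \<boxtimes> B) mAB (etaA \<otimes> etaB)"
  by (rule tensor_monoid[OF monoid_A monoid_B])
lemma monoid_BB: "is_monoid V (B \<boxtimes> B) mBB (etaB \<otimes> etaB)"
  by (rule tensor_monoid[OF monoid_B monoid_B])
lemma monoid_ABB: "is_monoid V (A \<boxtimes> B \<boxtimes> B) m3 ((etaA \<otimes> etaB) \<otimes> etaB)"
  using tensor_monoid[OF monoid_AB monoid_B] by simp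
lemma monoid_ABB': "is_monoid V (A \<boxtimes> B \<boxtimes> B) m3' (etaA \<otimes> (etaB \<otimes> etaB))"
  using tensor_monoid[OF monoid_A monoid_BB] by simp
lemma monoid_ABBB: "is_monoid V (A \<boxtimes> B \<boxtimes> B \<boxtimes> B) m4 (((etaA \<otimes> etaB) \<otimes> etaB) \<otimes> etaB)"
  using tensor_monoid[OF monoid_ABB monoid_B] by simp
lemma monoid_ABBB': "is_monoid V (A \<boxtimes> B \<boxtimes> B \<boxtimes> B) m4' ((etaA \<otimes> etaB) \<otimes> (etaB \<otimes> etaB))"
  using tensor_monoid[OF monoid_AB monoid_BB] by simp

lemmas arr_mAB = monoidD(2)[OF monoid_AB] and arr_mBB = monoidD(2)[OF monoid_BB]
  and arr_m3 = monoidD(2)[OF monoid_ABB] and arr_m3' = monoidD(2)[OF monoid_ABB']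
  and arr_m4 = monoidD(2)[OF monoid_ABBB] and arr_m4' = monoidD(2)[OF monoid_ABBB']
  and arr_etaAB = monoidD(3)[OF monoid_AB] and arr_etaBB = monoidD(3)[OF monoid_BB]

lemma m3_eq: "m3 = m3'" using tmult_tensor_assoc[OF obA obB obB arr_muA arr_muB arr_muB] .
lemma m4_eq: "m4 = m4'" using tmult_tensor_assoc[OF _ obB obB arr_mAB arr_muB arr_muB] by simp

lemma arr_idAB: "arr (idm (A \<boxtimes> B)) (A \<boxtimes> B) (A \<boxtimes> B)" by (rule arr_ident) simp
lemma arr_idBB: "arr (idm (B \<boxtimes> B)) (B \<boxtimes> B) (B \<boxtimes> B)" by (rule arr_ident) simp
lemma arr_idI: "arr (idm I) (I \<boxtimes> I) I" using arr_ident[of I] by simp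
lemma arr_idA_dl: "arr (idm A \<otimes> dl) (A \<boxtimes> B) (A \<boxtimes> B \<boxtimes> B)"
  using arr_tensor[OF arr_ident[OF obA] dl_arr] by simp

lemmas arr_intros_data = arr_intros arr_dotp arr_muA arr_etaA arr_muB arr_etaB dl_arr ep_arr gam_arr tau_arr
  arr_mAB arr_mBB arr_m3 arr_m3' arr_m4 arr_m4' arr_etaAB arr_etaBB arr_idAB arr_idBB

abbreviation "z \<equiv> dotp V mAB (etaA \<otimes> idm B) gam"
abbreviation "d \<equiv> dotp V m3 (etaA \<otimes> dl) tau"
abbreviation "w \<equiv> etaA \<cdot> ep"

lemma z_arr: "arr z (B \<boxtimes> A) (A \<boxtimes> B)" by (rule arr_intros_data | simp)+
lemma d_arr: "arr d B (A \<boxtimes> B \<boxtimes> B)" by (rule arr_intros_data | simp)+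
lemma w_arr: "arr w B A" by (rule arr_intros_data | simp)+

lemmas arr_intros_wreath = arr_intros_data z_arr d_arr w_arr

text \<open>Whiskering \<open>\<epsilon>\<close>, \<open>\<delta>\<close> and \<open>\<gamma>\<close> with identities gives monoid morphisms between the
tensor monoids, which therefore preserve dot products.\<close>

lemma monoid_hom_id_ep:
  "monoid_hom V (A \<boxtimes> B) mAB (etaA \<otimes> etaB) A muA etaA (idm A \<otimes> ep)"
  using tensor_monoid_hom[OF monoid_hom_ident[OF monoid_A] monoid_hom_ep obA obB obA ob_unit
      arr_muA arr_muB arr_muA arr_idI arr_etaA arr_etaB]
  by (simp add: tmult_unit[OF arr_muA] tensor_unit[OF arr_etaA])

lemma monoid_hom_id_dl:
  "monoid_hom V (A \<boxtimes> B) mAB (etaA \<otimes> etaB) (A \<boxtimes> B \<boxtimes> B) m3 (etaA \<otimes> (etaB \<otimes> etaB)) (idm A \<otimes> dl)"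
  using tensor_monoid_hom[OF monoid_hom_ident[OF monoid_A] monoid_hom_dl obA obB obA _
      arr_muA arr_muB arr_muA arr_mBB arr_etaA arr_etaB]
  by (simp add: m3_eq)

lemma monoid_hom_gam_id:
  "monoid_hom V (A \<boxtimes> B) mAB (etaA \<otimes> etaB) (A \<boxtimes> B \<boxtimes> B) m3 ((etaA \<otimes> etaB) \<otimes> etaB) (gam \<otimes> idm B)"
  using tensor_monoid_hom[OF gam_hom monoid_hom_ident[OF monoid_B] obA obB _ obB
      arr_muA arr_muB arr_mAB arr_muB arr_etaA arr_etaB]
  by simp

lemma monoid_hom_id_ep_id:
  "monoid_hom V (A \<boxtimes> B \<boxtimes> B) m3 ((etaA \<otimes> etaB) \<otimes> etaB) (A \<boxtimes> B) mAB (etaA \<otimes> etaB) ((idm A \<otimes> ep) \<otimes> idm B)"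
  using tensor_monoid_hom[OF monoid_hom_id_ep monoid_hom_ident[OF monoid_B] _ obB obA obB
      arr_mAB arr_muB arr_muA arr_muB arr_etaAB arr_etaB]
  by simp

lemma monoid_hom_idAB_ep:
  "monoid_hom V (A \<boxtimes> B \<boxtimes> B) m3 ((etaA \<otimes> etaB) \<otimes> etaB) (A \<boxtimes> B) mAB (etaA \<otimes> etaB) (idm (A \<boxtimes> B) \<otimes> ep)"
  using tensor_monoid_hom[OF monoid_hom_ident[OF monoid_AB] monoid_hom_ep _ obB _ ob_unit
      arr_mAB arr_muB arr_mAB arr_idI arr_etaAB arr_etaB]
  by (simp add: tmult_unit[OF arr_mAB] tensor_unit[OF arr_etaAB])

lemma monoid_hom_id_dl_id:
  "monoid_hom V (A \<boxtimes> B \<boxtimes> B) m3 ((etaA \<otimes> etaB) \<otimes> etaB) (A \<boxtimes> B \<boxtimes> B \<boxtimes> B) m4 ((etaA \<otimes> (etaB \<otimes> etaB)) \<otimes> etaB) ((idm A \<otimes> dl) \<otimes> idm B)"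
  using tensor_monoid_hom[OF monoid_hom_id_dl monoid_hom_ident[OF monoid_B] _ obB _ obB
      arr_mAB arr_muB arr_m3 arr_muB arr_etaAB arr_etaB]
  by simp

lemma monoid_hom_gam_idBB:
  "monoid_hom V (A \<boxtimes> B \<boxtimes> B) m3' (etaA \<otimes> (etaB \<otimes> etaB)) (A \<boxtimes> B \<boxtimes> B \<boxtimes> B) m4' ((etaA \<otimes> etaB) \<otimes> (etaB \<otimes> etaB)) (gam \<otimes> idm (B \<boxtimes> B))"
  using tensor_monoid_hom[OF gam_hom monoid_hom_ident[OF monoid_BB] obA _ _ _
      arr_muA arr_mBB arr_mAB arr_mBB arr_etaA arr_etaBB]
  by simp

lemma monoid_hom_idAB_dl:
  "monoid_hom V (A \<boxtimes> B \<boxtimes> B) m3 ((etaA \<otimes> etaB) \<otimes> etaB) (A \<boxtimes> B \<boxtimes> B \<boxtimes> B) m4 ((etaA \<otimes> etaB) \<otimes> (etaB \<otimes> etaB)) (idm (A \<boxtimes> B) \<otimes> dl)"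
  using tensor_monoid_hom[OF monoid_hom_ident[OF monoid_AB] monoid_hom_dl _ obB _ _
      arr_mAB arr_muB arr_mAB arr_mBB arr_etaAB arr_etaB]
  by (simp add: m4_eq)

lemma mult_z: "(muA \<otimes> idm B) \<cdot> (idm A \<otimes> z) = dotp V mAB (idm (A \<boxtimes> B)) gam"
proof -
  have "(muA \<otimes> idm B) \<cdot> (idm A \<otimes> z) = dotp V mAB (idm A \<otimes> etaB) z"
    by (rule mult_tensor_ident_eq_dotp[OF monoid_A monoid_B z_arr])
  also have "\<dots> = dotp V mAB (dotp V mAB (idm A \<otimes> etaB) (etaA \<otimes> idm B)) gam"
    by (rule dotp_assoc[OF monoid_AB, symmetric]) (rule arr_intros_wreath | simp)+
  also have "dotp V mAB (idm A \<otimes> etaB) (etaA \<otimes> idm B) = dotp V muA (idm A) etaA \<otimes> dotp V muB etaB (idm B)"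
    by (rule tmult_dotp_tensor[OF monoid_A monoid_B arr_ident[OF obA] arr_etaB arr_etaA arr_ident[OF obB]]) (simp add: braid_unit_left)
  also have "dotp V muA (idm A) etaA = idm A"
    by (rule dotp_unit_right[OF monoid_A arr_ident[OF obA]])
  also have "dotp V muB etaB (idm B) = idm B"
    by (rule dotp_unit_left[OF monoid_B arr_ident[OF obB]])
  finally show ?thesis using tensor_ident by simp
qed

lemma mult_d: "(muA \<otimes> idm (B \<boxtimes> B)) \<cdot> (idm A \<otimes> d) = dotp V m3 (idm A \<otimes> dl) tau"
proof -
  have "(muA \<otimes> idm (B \<boxtimes> B)) \<cdot> (idm A \<otimes> d) = dotp V m3' (idm A \<otimes> (etaB \<otimes> etaB)) d"
    by (rule mult_tensor_ident_eq_dotp[OF monoid_A monoid_BB d_arr])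
  also have "d = dotp V m3' (etaA \<otimes> dl) tau" using m3_eq by simp
  also have "dotp V m3' (idm A \<otimes> (etaB \<otimes> etaB)) (dotp V m3' (etaA \<otimes> dl) tau) = dotp V m3' (dotp V m3' (idm A \<otimes> (etaB \<otimes> etaB)) (etaA \<otimes> dl)) tau"
    by (rule dotp_assoc[OF monoid_ABB', symmetric]) (rule arr_intros_wreath | simp)+
  also have "dotp V m3' (idm A \<otimes> (etaB \<otimes> etaB)) (etaA \<otimes> dl) = dotp V muA (idm A) etaA \<otimes> dotp V mBB (etaB \<otimes> etaB) dl"
    by (rule tmult_dotp_tensor[OF monoid_A monoid_BB arr_ident[OF obA] arr_etaBB arr_etaA dl_arr]) (simp add: braid_unit_left)
  also have "dotp V muA (idm A) etaA = idm A"
    by (rule dotp_unit_right[OF monoid_A arr_ident[OF obA]])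
  also have "dotp V mBB (etaB \<otimes> etaB) dl = dl" by (rule dotp_unit_left[OF monoid_BB dl_arr])
  finally show ?thesis using m3_eq by simp
qed

lemma z_mult: "z \<cdot> (idm B \<otimes> muA) = (muA \<otimes> idm B) \<cdot> ((idm A \<otimes> z) \<cdot> (z \<otimes> idm A))"
proof -
  have "z \<cdot> (idm B \<otimes> muA) = dotp V mAB ((etaA \<otimes> idm B) \<cdot> idm B) (gam \<cdot> muA)"
    by (rule dotp_comp_tensor) (rule arr_intros_wreath | simp)+
  also have "(etaA \<otimes> idm B) \<cdot> idm B = etaA \<otimes> idm B"
    by (rule comp_ident_right) (rule arr_intros_wreath | simp)+
  also have "gam \<cdot> muA = dotp V mAB gam gam" unfolding dotp_def by (rule monoid_homD(2)[OF gam_hom])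
  finally have L: "z \<cdot> (idm B \<otimes> muA) = dotp V mAB (etaA \<otimes> idm B) (dotp V mAB gam gam)" .
  have "(muA \<otimes> idm B) \<cdot> ((idm A \<otimes> z) \<cdot> (z \<otimes> idm A)) = ((muA \<otimes> idm B) \<cdot> (idm A \<otimes> z)) \<cdot> (z \<otimes> idm A)"
    by (rule comp_assoc) (rule arr_intros_wreath | simp)+
  also have "\<dots> = dotp V mAB (idm (A \<boxtimes> B)) gam \<cdot> (z \<otimes> idm A)" by (simp add: mult_z)
  also have "\<dots> = dotp V mAB (idm (A \<boxtimes> B) \<cdot> z) (gam \<cdot> idm A)"
    by (rule dotp_comp_tensor) (rule arr_intros_wreath | simp)+
  also have "idm (A \<boxtimes> B) \<cdot> z = z" by (rule comp_ident_left) (rule arr_intros_wreath | simp)+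
  also have "gam \<cdot> idm A = gam" by (rule comp_ident_right) (rule arr_intros_wreath | simp)+
  also have "dotp V mAB z gam = dotp V mAB (etaA \<otimes> idm B) (dotp V mAB gam gam)"
    by (rule dotp_assoc[OF monoid_AB]) (rule arr_intros_wreath | simp)+
  finally show ?thesis using L by simp
qed

lemma z_unit: "z \<cdot> (idm B \<otimes> etaA) = etaA \<otimes> idm B"
proof -
  have "z \<cdot> (idm B \<otimes> etaA) = dotp V mAB ((etaA \<otimes> idm B) \<cdot> idm B) (gam \<cdot> etaA)"
    by (rule dotp_comp_tensor) (rule arr_intros_wreath | simp)+
  also have "(etaA \<otimes> idm B) \<cdot> idm B = etaA \<otimes> idm B"
    by (rule comp_ident_right) (rule arr_intros_wreath | simp)+
  also have "gam \<cdot> etaA = etaA \<otimes> etaB" by (rule monoid_homD(3)[OF gam_hom])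
  also have "dotp V mAB (etaA \<otimes> idm B) (etaA \<otimes> etaB) = etaA \<otimes> idm B"
    by (rule dotp_unit_right[OF monoid_AB]) (rule arr_intros_wreath | simp)+
  finally show ?thesis .
qed

lemma mult_w: "muA \<cdot> (idm A \<otimes> w) = idm A \<otimes> ep"
proof -
  have "idm A \<otimes> w = (idm A \<cdot> idm A) \<otimes> (etaA \<cdot> ep)"
    using comp_ident_left[OF arr_ident[OF obA]] by simp
  also have "\<dots> = (idm A \<otimes> etaA) \<cdot> (idm A \<otimes> ep)"
    by (rule interchange) (rule arr_intros_wreath | simp)+
  also have "muA \<cdot> ((idm A \<otimes> etaA) \<cdot> (idm A \<otimes> ep)) = (muA \<cdot> (idm A \<otimes> etaA)) \<cdot> (idm A \<otimes> ep)"
    by (rule comp_assoc) (rule arr_intros_wreath | simp)+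
  also have "muA \<cdot> (idm A \<otimes> etaA) = idm A" by (rule muA_unit_right)
  also have "idm A \<cdot> (idm A \<otimes> ep) = idm A \<otimes> ep"
    by (rule comp_ident_left) (rule arr_intros_wreath | simp)+
  finally show ?thesis .
qed

lemma w_eq_tensor: "etaA \<otimes> ep = w"
proof -
  have "etaA \<otimes> ep = (etaA \<cdot> idm I) \<otimes> (idm I \<cdot> ep)"
    using comp_ident_left[OF ep_arr] comp_ident_right[OF arr_etaA] by simp
  also have "\<dots> = (etaA \<otimes> idm I) \<cdot> (idm I \<otimes> ep)"
    by (rule interchange) (rule arr_intros_wreath | simp)+
  finally show ?thesis using tensor_unit[OF arr_etaA] unit_tensor[OF ep_arr] by simp
qed

lemma w_z: "muA \<cdot> (w \<otimes> idm A) = muA \<cdot> ((idm A \<otimes> w) \<cdot> z)"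
proof -
  have "muA \<cdot> ((idm A \<otimes> w) \<cdot> z) = (muA \<cdot> (idm A \<otimes> w)) \<cdot> z"
    by (rule comp_assoc) (rule arr_intros_wreath | simp)+
  also have "\<dots> = (idm A \<otimes> ep) \<cdot> z" by (simp add: mult_w)
  also have "\<dots> = dotp V muA ((idm A \<otimes> ep) \<cdot> (etaA \<otimes> idm B)) ((idm A \<otimes> ep) \<cdot> gam)"
    by (rule monoid_hom_dotp[OF monoid_hom_id_ep arr_mAB arr_muA]) (rule arr_intros_wreath | simp)+
  also have "(idm A \<otimes> ep) \<cdot> gam = idm A" by (rule gam_counit)
  also have "(idm A \<otimes> ep) \<cdot> (etaA \<otimes> idm B) = (idm A \<cdot> etaA) \<otimes> (ep \<cdot> idm B)"
    by (rule interchange[symmetric]) (rule arr_intros_wreath | simp)+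
  also have "idm A \<cdot> etaA = etaA" by (rule comp_ident_left) (rule arr_intros_wreath | simp)+
  also have "ep \<cdot> idm B = ep" by (rule comp_ident_right) (rule arr_intros_wreath | simp)+
  finally show ?thesis using w_eq_tensor unfolding dotp_def by simp
qed

lemma d_w_left: "(muA \<otimes> idm B) \<cdot> (((idm A \<otimes> w) \<otimes> idm B) \<cdot> d) = etaA \<otimes> idm B"
proof -
  have "(muA \<otimes> idm B) \<cdot> (((idm A \<otimes> w) \<otimes> idm B) \<cdot> d) = ((muA \<otimes> idm B) \<cdot> ((idm A \<otimes> w) \<otimes> idm B)) \<cdot> d"
    by (rule comp_assoc) (rule arr_intros_wreath | simp)+
  also have "(muA \<otimes> idm B) \<cdot> ((idm A \<otimes> w) \<otimes> idm B) = (muA \<cdot> (idm A \<otimes> w)) \<otimes> (idm B \<cdot> idm B)"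
    by (rule interchange[symmetric]) (rule arr_intros_wreath | simp)+
  also have "idm B \<cdot> idm B = idm B" by (rule comp_ident_left) (rule arr_intros_wreath | simp)+
  also note mult_w
  also have "((idm A \<otimes> ep) \<otimes> idm B) \<cdot> d = dotp V mAB (((idm A \<otimes> ep) \<otimes> idm B) \<cdot> (etaA \<otimes> dl)) (((idm A \<otimes> ep) \<otimes> idm B) \<cdot> tau)"
    by (rule monoid_hom_dotp[OF monoid_hom_id_ep_id arr_m3 arr_mAB]) (rule arr_intros_wreath | simp)+
  also have "((idm A \<otimes> ep) \<otimes> idm B) \<cdot> tau = etaA \<otimes> etaB" by (rule tau_normal_middle)
  also have "((idm A \<otimes> ep) \<otimes> idm B) \<cdot> (etaA \<otimes> dl) = etaA \<otimes> idm B"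
  proof -
    have "(idm A \<otimes> ep) \<otimes> idm B = idm A \<otimes> (ep \<otimes> idm B)"
      by (rule tensor_assoc) (rule arr_intros_wreath | simp)+
    moreover have "(idm A \<otimes> (ep \<otimes> idm B)) \<cdot> (etaA \<otimes> dl) = (idm A \<cdot> etaA) \<otimes> ((ep \<otimes> idm B) \<cdot> dl)"
      by (rule interchange[symmetric]) (rule arr_intros_wreath | simp)+
    moreover have "idm A \<cdot> etaA = etaA" by (rule comp_ident_left) (rule arr_intros_wreath | simp)+
    ultimately show ?thesis using dl_counit_left by simp
  qed
  also have "dotp V mAB (etaA \<otimes> idm B) (etaA \<otimes> etaB) = etaA \<otimes> idm B"
    by (rule dotp_unit_right[OF monoid_AB]) (rule arr_intros_wreath | simp)+
  finally show ?thesis .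
qed

lemma d_w_right: "(muA \<otimes> idm B) \<cdot> ((idm A \<otimes> z) \<cdot> (((idm A \<otimes> idm B) \<otimes> w) \<cdot> d)) = etaA \<otimes> idm B"
proof -
  have "(muA \<otimes> idm B) \<cdot> ((idm A \<otimes> z) \<cdot> (((idm A \<otimes> idm B) \<otimes> w) \<cdot> d)) = ((muA \<otimes> idm B) \<cdot> (idm A \<otimes> z)) \<cdot> (((idm A \<otimes> idm B) \<otimes> w) \<cdot> d)"
    by (rule comp_assoc) (rule arr_intros_wreath | simp)+
  also have "\<dots> = (((muA \<otimes> idm B) \<cdot> (idm A \<otimes> z)) \<cdot> ((idm A \<otimes> idm B) \<otimes> w)) \<cdot> d"
    by (rule comp_assoc) (rule arr_intros_wreath | simp)+
  also have "((muA \<otimes> idm B) \<cdot> (idm A \<otimes> z)) \<cdot> ((idm A \<otimes> idm B) \<otimes> w) = idm (A \<boxtimes> B) \<otimes> ep"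
  proof -
    have "((muA \<otimes> idm B) \<cdot> (idm A \<otimes> z)) \<cdot> ((idm A \<otimes> idm B) \<otimes> w) = dotp V mAB (idm (A \<boxtimes> B)) gam \<cdot> (idm (A \<boxtimes> B) \<otimes> w)"
      using mult_z tensor_ident by simp
    also have "\<dots> = dotp V mAB (idm (A \<boxtimes> B) \<cdot> idm (A \<boxtimes> B)) (gam \<cdot> w)"
      by (rule dotp_comp_tensor) (rule arr_intros_wreath | simp)+
    also have "gam \<cdot> w = (gam \<cdot> etaA) \<cdot> ep" by (rule comp_assoc) (rule arr_intros_wreath | simp)+
    also have "gam \<cdot> etaA = etaA \<otimes> etaB" by (rule monoid_homD(3)[OF gam_hom])
    also have "dotp V mAB (idm (A \<boxtimes> B) \<cdot> idm (A \<boxtimes> B)) ((etaA \<otimes> etaB) \<cdot> ep) = dotp V mAB (idm (A \<boxtimes> B)) (etaA \<otimes> etaB) \<cdot> (idm (A \<boxtimes> B) \<otimes> ep)"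
      by (rule dotp_comp_tensor[symmetric]) (rule arr_intros_wreath | simp)+
    also have "dotp V mAB (idm (A \<boxtimes> B)) (etaA \<otimes> etaB) = idm (A \<boxtimes> B)"
      by (rule dotp_unit_right[OF monoid_AB]) (rule arr_intros_wreath | simp)+
    also have "idm (A \<boxtimes> B) \<cdot> (idm (A \<boxtimes> B) \<otimes> ep) = idm (A \<boxtimes> B) \<otimes> ep"
      by (rule comp_ident_left) (rule arr_intros_wreath | simp)+
    finally show ?thesis .
  qed
  also have "(idm (A \<boxtimes> B) \<otimes> ep) \<cdot> d = dotp V mAB ((idm (A \<boxtimes> B) \<otimes> ep) \<cdot> (etaA \<otimes> dl)) ((idm (A \<boxtimes> B) \<otimes> ep) \<cdot> tau)"
    by (rule monoid_hom_dotp[OF monoid_hom_idAB_ep arr_m3 arr_mAB]) (rule arr_intros_wreath | simp)+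
  also have "(idm (A \<boxtimes> B) \<otimes> ep) \<cdot> tau = etaA \<otimes> etaB" by (rule tau_normal_right)
  also have "(idm (A \<boxtimes> B) \<otimes> ep) \<cdot> (etaA \<otimes> dl) = etaA \<otimes> idm B"
  proof -
    have "idm (A \<boxtimes> B) \<otimes> ep = (idm A \<otimes> idm B) \<otimes> ep" using tensor_ident by simp
    also have "\<dots> = idm A \<otimes> (idm B \<otimes> ep)" by (rule tensor_assoc) (rule arr_intros_wreath | simp)+
    finally have "(idm (A \<boxtimes> B) \<otimes> ep) \<cdot> (etaA \<otimes> dl) = (idm A \<otimes> (idm B \<otimes> ep)) \<cdot> (etaA \<otimes> dl)" by simp
    also have "\<dots> = (idm A \<cdot> etaA) \<otimes> ((idm B \<otimes> ep) \<cdot> dl)"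
      by (rule interchange[symmetric]) (rule arr_intros_wreath | simp)+
    also have "idm A \<cdot> etaA = etaA" by (rule comp_ident_left) (rule arr_intros_wreath | simp)+
    finally show ?thesis using dl_counit_right by simp
  qed
  also have "dotp V mAB (etaA \<otimes> idm B) (etaA \<otimes> etaB) = etaA \<otimes> idm B"
    by (rule dotp_unit_right[OF monoid_AB]) (rule arr_intros_wreath | simp)+
  finally show ?thesis .
qed

abbreviation "gam2 \<equiv> (gam \<otimes> idm B) \<cdot> gam"

lemma mult_d_comp_z: "(muA \<otimes> idm (B \<boxtimes> B)) \<cdot> ((idm A \<otimes> d) \<cdot> z) = dotp V m3 d gam2"
proof -
  have "(muA \<otimes> idm (B \<boxtimes> B)) \<cdot> ((idm A \<otimes> d) \<cdot> z) = ((muA \<otimes> idm (B \<boxtimes> B)) \<cdot> (idm A \<otimes> d)) \<cdot> (z \<otimes> idm I)"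
    using comp_assoc[of z] tensor_unit[OF z_arr] by (subst comp_assoc) (rule arr_intros_wreath | simp)+
  also have "\<dots> = dotp V m3 (idm A \<otimes> dl) tau \<cdot> (z \<otimes> idm I)" by (simp add: mult_d)
  also have "\<dots> = dotp V m3 ((idm A \<otimes> dl) \<cdot> z) (tau \<cdot> idm I)"
    by (rule dotp_comp_tensor) (rule arr_intros_wreath | simp)+
  also have "tau \<cdot> idm I = tau" by (rule comp_ident_right) (rule arr_intros_wreath | simp)+
  also have "(idm A \<otimes> dl) \<cdot> z = dotp V m3 ((idm A \<otimes> dl) \<cdot> (etaA \<otimes> idm B)) ((idm A \<otimes> dl) \<cdot> gam)"
    by (rule monoid_hom_dotp[OF monoid_hom_id_dl arr_mAB arr_m3]) (rule arr_intros_wreath | simp)+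
  also have "(idm A \<otimes> dl) \<cdot> (etaA \<otimes> idm B) = (idm A \<cdot> etaA) \<otimes> (dl \<cdot> idm B)"
    by (rule interchange[symmetric]) (rule arr_intros_wreath | simp)+
  also have "idm A \<cdot> etaA = etaA" by (rule comp_ident_left) (rule arr_intros_wreath | simp)+
  also have "dl \<cdot> idm B = dl" by (rule comp_ident_right) (rule arr_intros_wreath | simp)+
  also have "dotp V m3 (dotp V m3 (etaA \<otimes> dl) ((idm A \<otimes> dl) \<cdot> gam)) tau = dotp V m3 (etaA \<otimes> dl) (dotp V m3 ((idm A \<otimes> dl) \<cdot> gam) tau)"
    by (rule dotp_assoc[OF monoid_ABB]) (rule arr_intros_wreath | simp)+
  also have "dotp V m3 ((idm A \<otimes> dl) \<cdot> gam) tau = dotp V m3 tau gam2"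
    by (rule tau_coassoc[symmetric])
  also have "dotp V m3 (etaA \<otimes> dl) (dotp V m3 tau gam2) = dotp V m3 d gam2"
    by (rule dotp_assoc[OF monoid_ABB, symmetric]) (rule arr_intros_wreath | simp)+
  finally show ?thesis .
qed

lemma mult_z_tensor_B:
  "(muA \<otimes> idm (B \<boxtimes> B)) \<cdot> ((idm A \<otimes> z) \<otimes> idm B) = dotp V m3 (idm (A \<boxtimes> B) \<otimes> etaB) (gam \<otimes> idm B)"
proof -
  have "muA \<otimes> idm (B \<boxtimes> B) = muA \<otimes> (idm B \<otimes> idm B)" using tensor_ident by simp
  also have "\<dots> = (muA \<otimes> idm B) \<otimes> idm B" by (rule tensor_assoc[symmetric]) (rule arr_intros_wreath | simp)+
  finally have "(muA \<otimes> idm (B \<boxtimes> B)) \<cdot> ((idm A \<otimes> z) \<otimes> idm B) = ((muA \<otimes> idm B) \<otimes> idm B) \<cdot> ((idm A \<otimes> z) \<otimes> idm B)"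
    by simp
  also have "\<dots> = ((muA \<otimes> idm B) \<cdot> (idm A \<otimes> z)) \<otimes> (idm B \<cdot> idm B)"
    by (rule interchange[symmetric]) (rule arr_intros_wreath | simp)+
  also have "idm B \<cdot> idm B = idm B" by (rule comp_ident_left) (rule arr_intros_wreath | simp)+
  also note mult_z
  also have "dotp V mAB (idm (A \<boxtimes> B)) gam \<otimes> idm B = dotp V m3 (idm (A \<boxtimes> B) \<otimes> etaB) (gam \<otimes> idm B)"
  proof -
    have "dotp V m3 (idm (A \<boxtimes> B) \<otimes> etaB) (gam \<otimes> idm B) = dotp V mAB (idm (A \<boxtimes> B)) gam \<otimes> dotp V muB etaB (idm B)"
      by (rule tmult_dotp_tensor[OF monoid_AB monoid_B arr_idAB arr_etaB gam_arr arr_ident[OF obB]]) (simp add: braid_unit_left)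
    thus ?thesis using dotp_unit_left[OF monoid_B arr_ident[OF obB]] by simp
  qed
  finally show ?thesis .
qed

lemma mult_z_comp_z:
  "((muA \<otimes> idm (B \<boxtimes> B)) \<cdot> ((idm A \<otimes> z) \<otimes> idm B)) \<cdot> ((idm A \<otimes> idm B) \<otimes> z) = dotp V m3 (idm (A \<boxtimes> B \<boxtimes> B)) gam2"
proof -
  have "((muA \<otimes> idm (B \<boxtimes> B)) \<cdot> ((idm A \<otimes> z) \<otimes> idm B)) \<cdot> ((idm A \<otimes> idm B) \<otimes> z) = dotp V m3 (idm (A \<boxtimes> B) \<otimes> etaB) (gam \<otimes> idm B) \<cdot> (idm (A \<boxtimes> B) \<otimes> z)"
    using mult_z_tensor_B tensor_ident by simp
  also have "dotp V m3 (idm (A \<boxtimes> B) \<otimes> etaB) (gam \<otimes> idm B) \<cdot> (idm (A \<boxtimes> B) \<otimes> z) = 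
      dotp V m3 ((idm (A \<boxtimes> B) \<otimes> etaB) \<cdot> idm (A \<boxtimes> B)) ((gam \<otimes> idm B) \<cdot> z)" by (rule dotp_comp_tensor) (rule arr_intros_wreath | simp)+
  also have "(idm (A \<boxtimes> B) \<otimes> etaB) \<cdot> idm (A \<boxtimes> B) = idm (A \<boxtimes> B) \<otimes> etaB"
    using comp_ident_right[OF arr_tensor[OF arr_idAB arr_etaB]] by simp
  also have "(gam \<otimes> idm B) \<cdot> z = dotp V m3 ((gam \<otimes> idm B) \<cdot> (etaA \<otimes> idm B)) gam2"
    by (rule monoid_hom_dotp[OF monoid_hom_gam_id arr_mAB arr_m3]) (rule arr_intros_wreath | simp)+
  also have "(gam \<otimes> idm B) \<cdot> (etaA \<otimes> idm B) = (gam \<cdot> etaA) \<otimes> (idm B \<cdot> idm B)"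
    by (rule interchange[symmetric]) (rule arr_intros_wreath | simp)+
  also have "gam \<cdot> etaA = etaA \<otimes> etaB" by (rule monoid_homD(3)[OF gam_hom])
  also have "idm B \<cdot> idm B = idm B" by (rule comp_ident_left) (rule arr_intros_wreath | simp)+
  also have "dotp V m3 (idm (A \<boxtimes> B) \<otimes> etaB) (dotp V m3 ((etaA \<otimes> etaB) \<otimes> idm B) gam2) = dotp V m3 (dotp V m3 (idm (A \<boxtimes> B) \<otimes> etaB) ((etaA \<otimes> etaB) \<otimes> idm B)) gam2"
    by (rule dotp_assoc[OF monoid_ABB, symmetric]) (rule arr_intros_wreath | simp)+
  also have "dotp V m3 (idm (A \<boxtimes> B) \<otimes> etaB) ((etaA \<otimes> etaB) \<otimes> idm B) = dotp V mAB (idm (A \<boxtimes> B)) (etaA \<otimes> etaB) \<otimes> dotp V muB etaB (idm B)"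
    by (rule tmult_dotp_tensor[OF monoid_AB monoid_B arr_idAB arr_etaB arr_etaAB arr_ident[OF obB]]) (simp add: braid_unit_left)
  also have "dotp V mAB (idm (A \<boxtimes> B)) (etaA \<otimes> etaB) = idm (A \<boxtimes> B)"
    by (rule dotp_unit_right[OF monoid_AB arr_idAB])
  also have "dotp V muB etaB (idm B) = idm B"
    by (rule dotp_unit_left[OF monoid_B arr_ident[OF obB]])
  also have "idm (A \<boxtimes> B) \<otimes> idm B = idm (A \<boxtimes> B \<boxtimes> B)" using tensor_ident[of "A \<boxtimes> B" B] by simp
  finally show ?thesis .
qed

lemma d_z: "(muA \<otimes> idm (B \<boxtimes> B)) \<cdot> (((idm A \<otimes> z) \<otimes> idm B) \<cdot> (((idm A \<otimes> idm B) \<otimes> z) \<cdot> (d \<otimes> idm A))) =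
    (muA \<otimes> idm (B \<boxtimes> B)) \<cdot> ((idm A \<otimes> d) \<cdot> z)"
proof -
  have "(muA \<otimes> idm (B \<boxtimes> B)) \<cdot> (((idm A \<otimes> z) \<otimes> idm B) \<cdot> (((idm A \<otimes> idm B) \<otimes> z) \<cdot> (d \<otimes> idm A))) =
     ((muA \<otimes> idm (B \<boxtimes> B)) \<cdot> ((idm A \<otimes> z) \<otimes> idm B)) \<cdot> (((idm A \<otimes> idm B) \<otimes> z) \<cdot> (d \<otimes> idm A))" by (rule comp_assoc) (rule arr_intros_wreath | simp)+
  also have "\<dots> = (((muA \<otimes> idm (B \<boxtimes> B)) \<cdot> ((idm A \<otimes> z) \<otimes> idm B)) \<cdot> ((idm A \<otimes> idm B) \<otimes> z)) \<cdot> (d \<otimes> idm A)"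
    by (rule comp_assoc) (rule arr_intros_wreath | simp)+
  also note mult_z_comp_z
  also have "dotp V m3 (idm (A \<boxtimes> B \<boxtimes> B)) gam2 \<cdot> (d \<otimes> idm A) = dotp V m3 (idm (A \<boxtimes> B \<boxtimes> B) \<cdot> d) (gam2 \<cdot> idm A)"
    by (rule dotp_comp_tensor) (rule arr_intros_wreath | simp)+
  also have "idm (A \<boxtimes> B \<boxtimes> B) \<cdot> d = d" by (rule comp_ident_left) (rule arr_intros_wreath | simp)+
  also have "gam2 \<cdot> idm A = gam2" by (rule comp_ident_right) (rule arr_intros_wreath | simp)+
  finally show ?thesis using mult_d_comp_z by simp
qed

lemma mult_d_tensor_B:
  "(muA \<otimes> idm (B \<boxtimes> B \<boxtimes> B)) \<cdot> ((idm A \<otimes> d) \<otimes> idm B) = dotp V m4 ((idm A \<otimes> dl) \<otimes> idm B) (tau \<otimes> etaB)"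
proof -
  let ?F1 = "(idm A \<otimes> dl) \<otimes> idm B"
  have "muA \<otimes> idm (B \<boxtimes> B \<boxtimes> B) = muA \<otimes> (idm (B \<boxtimes> B) \<otimes> idm B)"
    using tensor_ident[of "B \<boxtimes> B" B] by simp
  also have "\<dots> = (muA \<otimes> idm (B \<boxtimes> B)) \<otimes> idm B"
    by (rule tensor_assoc[symmetric]) (rule arr_intros_wreath | simp)+
  finally have "(muA \<otimes> idm (B \<boxtimes> B \<boxtimes> B)) \<cdot> ((idm A \<otimes> d) \<otimes> idm B) = ((muA \<otimes> idm (B \<boxtimes> B)) \<otimes> idm B) \<cdot> ((idm A \<otimes> d) \<otimes> idm B)"
    by simp
  also have "\<dots> = ((muA \<otimes> idm (B \<boxtimes> B)) \<cdot> (idm A \<otimes> d)) \<otimes> (idm B \<cdot> idm B)"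
    by (rule interchange[symmetric]) (rule arr_intros_wreath | simp)+
  also have "idm B \<cdot> idm B = idm B" by (rule comp_ident_left) (rule arr_intros_wreath | simp)+
  also note mult_d
  also have "dotp V m3 (idm A \<otimes> dl) tau \<otimes> idm B = dotp V m4 ?F1 (tau \<otimes> etaB)"
  proof -
    have "dotp V m4 ?F1 (tau \<otimes> etaB) = dotp V m3 (idm A \<otimes> dl) tau \<otimes> dotp V muB (idm B) etaB"
      by (rule tmult_dotp_tensor[OF monoid_ABB monoid_B arr_idA_dl arr_ident[OF obB] tau_arr arr_etaB]) (simp add: braid_unit_right)
    thus ?thesis using dotp_unit_right[OF monoid_B arr_ident[OF obB]] by simp
  qed
  finally show ?thesis .
qed

lemma d_coassoc_lhs:
  "(muA \<otimes> idm (B \<boxtimes> B \<boxtimes> B)) \<cdot> (((idm A \<otimes> d) \<otimes> idm B) \<cdot> d) =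
    dotp V m4 (etaA \<otimes> ((dl \<otimes> idm B) \<cdot> dl)) (dotp V m4 (((idm A \<otimes> dl) \<otimes> idm B) \<cdot> tau) (tau \<otimes> etaB))"
proof -
  let ?F1 = "(idm A \<otimes> dl) \<otimes> idm B"
  let ?X = "?F1 \<cdot> tau"
  note S1 = mult_d_tensor_B
  have "(muA \<otimes> idm (B \<boxtimes> B \<boxtimes> B)) \<cdot> (((idm A \<otimes> d) \<otimes> idm B) \<cdot> d) = ((muA \<otimes> idm (B \<boxtimes> B \<boxtimes> B)) \<cdot> ((idm A \<otimes> d) \<otimes> idm B)) \<cdot> (d \<otimes> idm I)"
    using tensor_unit[OF d_arr] by (subst comp_assoc) (rule arr_intros_wreath | simp)+
  also have "\<dots> = dotp V m4 ?F1 (tau \<otimes> etaB) \<cdot> (d \<otimes> idm I)" using S1 by simp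
  also have "\<dots> = dotp V m4 (?F1 \<cdot> d) ((tau \<otimes> etaB) \<cdot> idm I)"
    by (rule dotp_comp_tensor) (rule arr_intros_wreath | simp)+
  also have "(tau \<otimes> etaB) \<cdot> idm I = tau \<otimes> etaB"
    using comp_ident_right[OF arr_tensor[OF tau_arr arr_etaB]] by simp
  also have "?F1 \<cdot> d = dotp V m4 (?F1 \<cdot> (etaA \<otimes> dl)) ?X"
    by (rule monoid_hom_dotp[OF monoid_hom_id_dl_id arr_m3 arr_m4]) (rule arr_intros_wreath | simp)+
  also have "?F1 \<cdot> (etaA \<otimes> dl) = etaA \<otimes> ((dl \<otimes> idm B) \<cdot> dl)"
  proof -
    have "?F1 = idm A \<otimes> (dl \<otimes> idm B)" by (rule tensor_assoc) (rule arr_intros_wreath | simp)+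
    hence "?F1 \<cdot> (etaA \<otimes> dl) = (idm A \<otimes> (dl \<otimes> idm B)) \<cdot> (etaA \<otimes> dl)" by simp
    also have "\<dots> = (idm A \<cdot> etaA) \<otimes> ((dl \<otimes> idm B) \<cdot> dl)"
      by (rule interchange[symmetric]) (rule arr_intros_wreath | simp)+
    also have "idm A \<cdot> etaA = etaA" by (rule comp_ident_left) (rule arr_intros_wreath | simp)+
    finally show ?thesis .
  qed
  also have "dotp V m4 (dotp V m4 (etaA \<otimes> ((dl \<otimes> idm B) \<cdot> dl)) ?X) (tau \<otimes> etaB) = 
     dotp V m4 (etaA \<otimes> ((dl \<otimes> idm B) \<cdot> dl)) (dotp V m4 ?X (tau \<otimes> etaB))"
    by (rule dotp_assoc[OF monoid_ABBB]) (rule arr_intros_wreath | simp)+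
  finally show ?thesis .
qed

lemma mult_z_tensor_BB:
  "(muA \<otimes> idm (B \<boxtimes> B \<boxtimes> B)) \<cdot> ((idm A \<otimes> z) \<otimes> idm (B \<boxtimes> B)) =
    dotp V m4 (idm (A \<boxtimes> B) \<otimes> (etaB \<otimes> etaB)) (gam \<otimes> idm (B \<boxtimes> B))"
proof -
  have "muA \<otimes> idm (B \<boxtimes> B \<boxtimes> B) = muA \<otimes> (idm B \<otimes> idm (B \<boxtimes> B))"
    using tensor_ident[of B "B \<boxtimes> B"] by simp
  also have "\<dots> = (muA \<otimes> idm B) \<otimes> idm (B \<boxtimes> B)"
    by (rule tensor_assoc[symmetric]) (rule arr_intros_wreath | simp)+
  finally have "(muA \<otimes> idm (B \<boxtimes> B \<boxtimes> B)) \<cdot> ((idm A \<otimes> z) \<otimes> idm (B \<boxtimes> B)) = ((muA \<otimes> idm B) \<otimes> idm (B \<boxtimes> B)) \<cdot> ((idm A \<otimes> z) \<otimes> idm (B \<boxtimes> B))"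
    by simp
  also have "\<dots> = ((muA \<otimes> idm B) \<cdot> (idm A \<otimes> z)) \<otimes> (idm (B \<boxtimes> B) \<cdot> idm (B \<boxtimes> B))"
    by (rule interchange[symmetric]) (rule arr_intros_wreath | simp)+
  also have "idm (B \<boxtimes> B) \<cdot> idm (B \<boxtimes> B) = idm (B \<boxtimes> B)"
    by (rule comp_ident_left) (rule arr_intros_wreath | simp)+
  also note mult_z
  also have "dotp V mAB (idm (A \<boxtimes> B)) gam \<otimes> idm (B \<boxtimes> B) = dotp V m4 (idm (A \<boxtimes> B) \<otimes> (etaB \<otimes> etaB)) (gam \<otimes> idm (B \<boxtimes> B))"
  proof -
    have "dotp V m4' (idm (A \<boxtimes> B) \<otimes> (etaB \<otimes> etaB)) (gam \<otimes> idm (B \<boxtimes> B)) = dotp V mAB (idm (A \<boxtimes> B)) gam \<otimes> dotp V mBB (etaB \<otimes> etaB) (idm (B \<boxtimes> B))"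
      by (rule tmult_dotp_tensor[OF monoid_AB monoid_BB arr_idAB arr_etaBB gam_arr arr_idBB]) (simp add: braid_unit_left)
    thus ?thesis using dotp_unit_left[OF monoid_BB arr_idBB] m4_eq by simp
  qed
  finally show ?thesis .
qed

lemma mult_z_tensor_BB_comp_d:
  "((muA \<otimes> idm (B \<boxtimes> B \<boxtimes> B)) \<cdot> ((idm A \<otimes> z) \<otimes> idm (B \<boxtimes> B))) \<cdot> ((idm A \<otimes> idm B) \<otimes> d) =
    dotp V m4 (idm (A \<boxtimes> B) \<otimes> dl) ((gam \<otimes> idm (B \<boxtimes> B)) \<cdot> tau)"
proof -
  let ?T = "(gam \<otimes> idm (B \<boxtimes> B)) \<cdot> tau"
  let ?k = "idm (A \<boxtimes> B) \<otimes> (etaB \<otimes> etaB)"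
  have "((muA \<otimes> idm (B \<boxtimes> B \<boxtimes> B)) \<cdot> ((idm A \<otimes> z) \<otimes> idm (B \<boxtimes> B))) \<cdot> ((idm A \<otimes> idm B) \<otimes> d) = 
      dotp V m4 ?k (gam \<otimes> idm (B \<boxtimes> B)) \<cdot> (idm (A \<boxtimes> B) \<otimes> d)" using mult_z_tensor_BB tensor_ident by simp
  also have "\<dots> = dotp V m4 (?k \<cdot> idm (A \<boxtimes> B)) ((gam \<otimes> idm (B \<boxtimes> B)) \<cdot> d)"
    by (rule dotp_comp_tensor) (rule arr_intros_wreath | simp)+
  also have "?k \<cdot> idm (A \<boxtimes> B) = ?k" using comp_ident_right[OF arr_tensor[OF arr_idAB arr_etaBB]] by simp
  also have "(gam \<otimes> idm (B \<boxtimes> B)) \<cdot> d = dotp V m4' ((gam \<otimes> idm (B \<boxtimes> B)) \<cdot> (etaA \<otimes> dl)) ?T"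
  proof -
    have "(gam \<otimes> idm (B \<boxtimes> B)) \<cdot> dotp V m3' (etaA \<otimes> dl) tau = dotp V m4' ((gam \<otimes> idm (B \<boxtimes> B)) \<cdot> (etaA \<otimes> dl)) ?T"
      by (rule monoid_hom_dotp[OF monoid_hom_gam_idBB arr_m3' arr_m4']) (rule arr_intros_wreath | simp)+
    thus ?thesis using m3_eq by simp
  qed
  also have "(gam \<otimes> idm (B \<boxtimes> B)) \<cdot> (etaA \<otimes> dl) = (gam \<cdot> etaA) \<otimes> (idm (B \<boxtimes> B) \<cdot> dl)"
    by (rule interchange[symmetric]) (rule arr_intros_wreath | simp)+
  also have "gam \<cdot> etaA = etaA \<otimes> etaB" by (rule monoid_homD(3)[OF gam_hom])
  also have "idm (B \<boxtimes> B) \<cdot> dl = dl" by (rule comp_ident_left) (rule arr_intros_wreath | simp)+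
  also have "dotp V m4 ?k (dotp V m4' ((etaA \<otimes> etaB) \<otimes> dl) ?T) = dotp V m4 (dotp V m4 ?k ((etaA \<otimes> etaB) \<otimes> dl)) ?T"
    unfolding m4_eq[symmetric] by (rule dotp_assoc[OF monoid_ABBB, symmetric]) (rule arr_intros_wreath | simp)+
  also have "dotp V m4 ?k ((etaA \<otimes> etaB) \<otimes> dl) = idm (A \<boxtimes> B) \<otimes> dl"
  proof -
    have "dotp V m4' ?k ((etaA \<otimes> etaB) \<otimes> dl) = dotp V mAB (idm (A \<boxtimes> B)) (etaA \<otimes> etaB) \<otimes> dotp V mBB (etaB \<otimes> etaB) dl"
      by (rule tmult_dotp_tensor[OF monoid_AB monoid_BB arr_idAB arr_etaBB arr_etaAB dl_arr]) (simp add: braid_unit_left)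
    thus ?thesis using dotp_unit_right[OF monoid_AB arr_idAB] dotp_unit_left[OF monoid_BB dl_arr] m4_eq by simp
  qed
  finally show ?thesis .
qed

lemma d_coassoc_rhs:
  "(muA \<otimes> idm (B \<boxtimes> B \<boxtimes> B)) \<cdot> (((idm A \<otimes> z) \<otimes> idm (B \<boxtimes> B)) \<cdot> (((idm A \<otimes> idm B) \<otimes> d) \<cdot> d)) =
    dotp V m4 (etaA \<otimes> ((idm B \<otimes> dl) \<cdot> dl)) (dotp V m4 ((idm (A \<boxtimes> B) \<otimes> dl) \<cdot> tau) ((gam \<otimes> idm (B \<boxtimes> B)) \<cdot> tau))"
proof -
  let ?Y = "(idm (A \<boxtimes> B) \<otimes> dl) \<cdot> tau"
  let ?T = "(gam \<otimes> idm (B \<boxtimes> B)) \<cdot> tau"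
  have "(muA \<otimes> idm (B \<boxtimes> B \<boxtimes> B)) \<cdot> (((idm A \<otimes> z) \<otimes> idm (B \<boxtimes> B)) \<cdot> (((idm A \<otimes> idm B) \<otimes> d) \<cdot> d)) =
     ((muA \<otimes> idm (B \<boxtimes> B \<boxtimes> B)) \<cdot> ((idm A \<otimes> z) \<otimes> idm (B \<boxtimes> B))) \<cdot> (((idm A \<otimes> idm B) \<otimes> d) \<cdot> d)" by (rule comp_assoc) (rule arr_intros_wreath | simp)+
  also have "\<dots> = (((muA \<otimes> idm (B \<boxtimes> B \<boxtimes> B)) \<cdot> ((idm A \<otimes> z) \<otimes> idm (B \<boxtimes> B))) \<cdot> ((idm A \<otimes> idm B) \<otimes> d)) \<cdot> (d \<otimes> idm I)"
    using tensor_unit[OF d_arr] by (subst comp_assoc) (rule arr_intros_wreath | simp)+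
  also note mult_z_tensor_BB_comp_d
  also have "dotp V m4 (idm (A \<boxtimes> B) \<otimes> dl) ?T \<cdot> (d \<otimes> idm I) = dotp V m4 ((idm (A \<boxtimes> B) \<otimes> dl) \<cdot> d) (?T \<cdot> idm I)"
    by (rule dotp_comp_tensor) (rule arr_intros_wreath | simp)+
  also have "?T \<cdot> idm I = ?T" by (rule comp_ident_right) (rule arr_intros_wreath | simp)+
  also have "(idm (A \<boxtimes> B) \<otimes> dl) \<cdot> d = dotp V m4 ((idm (A \<boxtimes> B) \<otimes> dl) \<cdot> (etaA \<otimes> dl)) ?Y"
    by (rule monoid_hom_dotp[OF monoid_hom_idAB_dl arr_m3 arr_m4]) (rule arr_intros_wreath | simp)+
  also have "(idm (A \<boxtimes> B) \<otimes> dl) \<cdot> (etaA \<otimes> dl) = etaA \<otimes> ((idm B \<otimes> dl) \<cdot> dl)"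
  proof -
    have "idm (A \<boxtimes> B) \<otimes> dl = (idm A \<otimes> idm B) \<otimes> dl" using tensor_ident by simp
    also have "\<dots> = idm A \<otimes> (idm B \<otimes> dl)" by (rule tensor_assoc) (rule arr_intros_wreath | simp)+
    finally have "(idm (A \<boxtimes> B) \<otimes> dl) \<cdot> (etaA \<otimes> dl) = (idm A \<otimes> (idm B \<otimes> dl)) \<cdot> (etaA \<otimes> dl)" by simp
    also have "\<dots> = (idm A \<cdot> etaA) \<otimes> ((idm B \<otimes> dl) \<cdot> dl)"
      by (rule interchange[symmetric]) (rule arr_intros_wreath | simp)+
    also have "idm A \<cdot> etaA = etaA" by (rule comp_ident_left) (rule arr_intros_wreath | simp)+
    finally show ?thesis .
  qed
  also have "dotp V m4 (dotp V m4 (etaA \<otimes> ((idm B \<otimes> dl) \<cdot> dl)) ?Y) ?T = dotp V m4 (etaA \<otimes> ((idm B \<otimes> dl) \<cdot> dl)) (dotp V m4 ?Y ?T)"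
    by (rule dotp_assoc[OF monoid_ABBB]) (rule arr_intros_wreath | simp)+
  finally show ?thesis .
qed

lemma d_coassoc: "(muA \<otimes> idm (B \<boxtimes> B \<boxtimes> B)) \<cdot> (((idm A \<otimes> d) \<otimes> idm B) \<cdot> d) =
   (muA \<otimes> idm (B \<boxtimes> B \<boxtimes> B)) \<cdot> (((idm A \<otimes> z) \<otimes> idm (B \<boxtimes> B)) \<cdot> (((idm A \<otimes> idm B) \<otimes> d) \<cdot> d))"
  using d_coassoc_lhs d_coassoc_rhs tau_cocycle dl_coassoc by simp

lemma mixed_opwreath_of_coaction: "mixed_opwreath V A muA etaA B d w z"
  unfolding mixed_opwreath_def Let_def
  using z_mult z_unit w_z d_z d_coassoc d_w_left d_w_right d_arr z_arr w_arr unfolding arr_def by simp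

end

theorem proposition4p2:
  fixes V :: "('o, 'm) bmcat"
    and A B :: 'o
    and muA etaA muB etaB dl ep gam tau :: 'm
  assumes "braided_moncat V"
    and "is_monoid V A muA etaA"
    and "is_bimonoid V B muB etaB dl ep"
    and "twisted_coaction V A muA etaA B muB etaB dl ep gam tau"
  shows "mixed_opwreath V A muA etaA B
           (dotp V (tmult V (tob V A B) (tmult V A muA B muB) B muB)
                 (tar V etaA dl) tau)
           (cmp V etaA ep)
           (dotp V (tmult V A muA B muB) (tar V etaA (ident V B)) gam)"
proof -
  interpret twisted_coaction_data V A B muA etaA muB etaB dl ep gam tau
    using assms by (unfold_locales) auto
  show ?thesis by (rule mixed_opwreath_of_coaction)
qed

end
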